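(* Let $(M^4,g,I,J)$ be a nondegenerate generalized Kähler four-manifold with angle function $p$ and Lee form $\theta=\theta_I$. Then (1) $\langle dp,\theta\rangle_g=0$; (2) $|\theta|_g^2=\dfrac{|dp|_g^2}{1-p^2}$.
   Context: Generalized Kähler (GK) structure: $I,J$ are integrable complex structures and $g$ is Hermitian for both. With $\omega_I(X,Y)=g(X,IY)$ and $\omega_J(X,Y)=g(X,JY)$, one has $d^c_I\omega_I=H=-d^c_J\omega_J$ and $dH=0$, where $d^c=\sqrt{-1}(\bar\partial-\partial)$. The Lee form $\theta=\theta_I$ is defined by $d\omega_I=\theta\wedge\omega_I$. The angle function is $p=\frac14\operatorname{tr}(IJ)$. Nondegenerate means $g^{-1}[I,J]$ is nondegenerate; in dimension $4$ this is equivalent to $I,J$ inducing the same orientation with $|p|<1$. *)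

theory Defs
  imports "HOL-Analysis.Analysis"
begin

text \<open>Local coordinate model: tensor fields on an open set U of R^4 (a coordinate
chart of the 4-manifold).  Vectors are real^4, endomorphism fields are matrices
A x $ k $ j = A^k_j acting by A *v X; the metric is the matrix g_ij;
2-forms are antisymmetric matrices om_ij; 3- and 4-forms are component functions.
Forms are evaluated on coordinate vectors (no 1/k! factors), i.e. the
determinant convention for wedge products and the invariant formula for d.\<close>

type_synonym pt = "real^4"

definition pd :: "(pt \<Rightarrow> real) \<Rightarrow> 4 \<Rightarrow> pt \<Rightarrow> real" where
  "pd f i x = frechet_derivative f (at x) (axis i 1)"

fun pds :: "4 list \<Rightarrow> (pt \<Rightarrow> real) \<Rightarrow> pt \<Rightarrow> real" where
  "pds [] f = f"
| "pds (k # ks) f = pd (pds ks f) k"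

definition smooth_fun :: "pt set \<Rightarrow> (pt \<Rightarrow> real) \<Rightarrow> bool" where
  "smooth_fun U f \<longleftrightarrow> (\<forall>ks. \<forall>x\<in>U. pds ks f differentiable (at x))"

definition smooth_mat :: "pt set \<Rightarrow> (pt \<Rightarrow> real^4^4) \<Rightarrow> bool" where
  "smooth_mat U A \<longleftrightarrow> (\<forall>i j. smooth_fun U (\<lambda>x. A x $ i $ j))"

definition smooth_3form :: "pt set \<Rightarrow> (pt \<Rightarrow> 4 \<Rightarrow> 4 \<Rightarrow> 4 \<Rightarrow> real) \<Rightarrow> bool" where
  "smooth_3form U H \<longleftrightarrow> (\<forall>i j k. smooth_fun U (\<lambda>x. H x i j k))"

definition nijenhuis :: "(pt \<Rightarrow> real^4^4) \<Rightarrow> pt \<Rightarrow> 4 \<Rightarrow> 4 \<Rightarrow> 4 \<Rightarrow> real" where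
  "nijenhuis A x i j k =
     (\<Sum>l\<in>UNIV. A x $ l $ i * pd (\<lambda>y. A y $ k $ j) l x
              - A x $ l $ j * pd (\<lambda>y. A y $ k $ i) l x
              - A x $ k $ l * (pd (\<lambda>y. A y $ l $ j) i x - pd (\<lambda>y. A y $ l $ i) j x))"

definition complex_structure :: "pt set \<Rightarrow> (pt \<Rightarrow> real^4^4) \<Rightarrow> bool" where
  "complex_structure U A \<longleftrightarrow> smooth_mat U A \<and>
     (\<forall>x\<in>U. A x ** A x = - mat 1) \<and>
     (\<forall>x\<in>U. \<forall>i j k. nijenhuis A x i j k = 0)"

definition riemannian_metric :: "pt set \<Rightarrow> (pt \<Rightarrow> real^4^4) \<Rightarrow> bool" where
  "riemannian_metric U g \<longleftrightarrow> smooth_mat U g \<and>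
     (\<forall>x\<in>U. transpose (g x) = g x \<and> (\<forall>v. v \<noteq> 0 \<longrightarrow> v \<bullet> (g x *v v) > 0))"

definition hermitian :: "pt set \<Rightarrow> (pt \<Rightarrow> real^4^4) \<Rightarrow> (pt \<Rightarrow> real^4^4) \<Rightarrow> bool" where
  "hermitian U g A \<longleftrightarrow> (\<forall>x\<in>U. transpose (A x) ** g x ** A x = g x)"

text \<open>Fundamental form omega_A(X,Y) = g(X,AY), components (g A)_ij.\<close>
definition fund_form :: "(pt \<Rightarrow> real^4^4) \<Rightarrow> (pt \<Rightarrow> real^4^4) \<Rightarrow> pt \<Rightarrow> real^4^4" where
  "fund_form g A x = g x ** A x"

definition d2 :: "(pt \<Rightarrow> real^4^4) \<Rightarrow> pt \<Rightarrow> 4 \<Rightarrow> 4 \<Rightarrow> 4 \<Rightarrow> real" where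
  "d2 om x i j k = pd (\<lambda>y. om y $ j $ k) i x + pd (\<lambda>y. om y $ k $ i) j x
                 + pd (\<lambda>y. om y $ i $ j) k x"

definition d3 :: "(pt \<Rightarrow> 4 \<Rightarrow> 4 \<Rightarrow> 4 \<Rightarrow> real) \<Rightarrow> pt \<Rightarrow> 4 \<Rightarrow> 4 \<Rightarrow> 4 \<Rightarrow> 4 \<Rightarrow> real" where
  "d3 H x i j k l = pd (\<lambda>y. H y j k l) i x - pd (\<lambda>y. H y i k l) j x
                  + pd (\<lambda>y. H y i j l) k x - pd (\<lambda>y. H y i j k) l x"

text \<open>d^c = A^{-1} d A acting on a 2-form om with A om = om (om(AX,AY)=om(X,Y)):
 (d^c om)(X,Y,Z) = - (d om)(AX,AY,AZ).  (Here d^c = sqrt(-1)(dbar - d).)\<close>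
definition dc2 :: "(pt \<Rightarrow> real^4^4) \<Rightarrow> (pt \<Rightarrow> real^4^4) \<Rightarrow> pt \<Rightarrow> 4 \<Rightarrow> 4 \<Rightarrow> 4 \<Rightarrow> real" where
  "dc2 A om x i j k = - (\<Sum>a\<in>UNIV. \<Sum>b\<in>UNIV. \<Sum>c\<in>UNIV.
        d2 om x a b c * A x $ a $ i * A x $ b $ j * A x $ c $ k)"

definition wedge12 :: "real^4 \<Rightarrow> real^4^4 \<Rightarrow> 4 \<Rightarrow> 4 \<Rightarrow> 4 \<Rightarrow> real" where
  "wedge12 th om i j k = th $ i * om $ j $ k + th $ j * om $ k $ i + th $ k * om $ i $ j"

definition generalized_kaehler :: "pt set \<Rightarrow> (pt \<Rightarrow> real^4^4) \<Rightarrow> (pt \<Rightarrow> real^4^4)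
   \<Rightarrow> (pt \<Rightarrow> real^4^4) \<Rightarrow> bool" where
  "generalized_kaehler U g I J \<longleftrightarrow>
     riemannian_metric U g \<and> complex_structure U I \<and> complex_structure U J \<and>
     hermitian U g I \<and> hermitian U g J \<and>
     (\<exists>H. smooth_3form U H \<and>
        (\<forall>x\<in>U. \<forall>i j k. dc2 I (fund_form g I) x i j k = H x i j k) \<and>
        (\<forall>x\<in>U. \<forall>i j k. H x i j k = - dc2 J (fund_form g J) x i j k) \<and>
        (\<forall>x\<in>U. \<forall>i j k l. d3 H x i j k l = 0))"

text \<open>Nondegenerate: g^{-1}[I,J] nondegenerate, i.e. [I,J] invertible at every point.\<close>
definition nondegenerate :: "pt set \<Rightarrow> (pt \<Rightarrow> real^4^4) \<Rightarrow> (pt \<Rightarrow> real^4^4) \<Rightarrow> bool" where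
  "nondegenerate U I J \<longleftrightarrow> (\<forall>x\<in>U. det (I x ** J x - J x ** I x) \<noteq> 0)"

definition angle :: "(pt \<Rightarrow> real^4^4) \<Rightarrow> (pt \<Rightarrow> real^4^4) \<Rightarrow> pt \<Rightarrow> real" where
  "angle I J x = trace (I x ** J x) / 4"

definition dfun :: "(pt \<Rightarrow> real) \<Rightarrow> pt \<Rightarrow> real^4" where
  "dfun f x = (\<chi> i. pd f i x)"

text \<open>Metric pairing of 1-forms: g^{ij} a_i b_j.\<close>
definition inner_g :: "real^4^4 \<Rightarrow> real^4 \<Rightarrow> real^4 \<Rightarrow> real" where
  "inner_g G a b = a \<bullet> (matrix_inv G *v b)"

end

theory Submission
  imports Defs
begin

text \<open>At a point, choose a \<open>g\<close>-orthonormal frame in which \<open>I\<close> is the standard complex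
  structure \<open>I0\<close>. In dimension four, nondegeneracy forces \<open>J\<close> to be one of the structures
  \<open>Jabc a b c\<close> in this frame, with angle \<open>p = a\<close>; hence \<open>IJ + JI = 2p\<close> and
  \<open>(IJ)\<^sup>*(\<theta> \<and> \<omega>\<^sub>I) = -\<theta> \<and> \<omega>\<^sub>J\<close>, and together with \<open>d\<^sup>c\<^sub>I\<omega>\<^sub>I = -d\<^sup>c\<^sub>J\<omega>\<^sub>J\<close> the latter gives
  \<open>d\<omega>\<^sub>J = -\<theta> \<and> \<omega>\<^sub>J\<close>.
  For an integrable Hermitian structure \<open>A\<close> with \<open>d\<omega>\<^sub>A = \<theta>\<^sub>A \<and> \<omega>\<^sub>A\<close>, the classical formula
  for \<open>\<nabla>\<omega>\<^sub>A\<close> in terms of \<open>d\<omega>\<^sub>A\<close> expresses the derivatives of \<open>A\<close> through \<open>\<theta>\<^sub>A\<close> and the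
  Christoffel symbols. In \<open>dp = d tr(IJ)/4\<close> the Christoffel terms cancel, leaving
  \<open>dp = [I,J]\<^sup>*\<theta>/2\<close>. Finally \<open>[I,J] g\<^sup>-\<^sup>1\<close> is skew and \<open>[I,J]\<^sup>2 = 4(p\<^sup>2 - 1)\<close>, which gives
  \<open>\<langle>dp, \<theta>\<rangle> = 0\<close> and \<open>|dp|\<^sup>2 = (1 - p\<^sup>2) |\<theta>|\<^sup>2\<close>.\<close>

lemma matrix_mul_uminus_right: "(A::'a::ring_1^'n^'m) ** (- B) = - (A ** B)"
  by (simp add: vec_eq_iff matrix_matrix_mult_def sum_negf)

lemma matrix_mul_uminus_left: "(- A::'a::ring_1^'n^'m) ** B = - (A ** B)"
  by (simp add: vec_eq_iff matrix_matrix_mult_def sum_negf)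

lemma matrix_add_rdistrib: "((A::'a::semiring_1^'n^'m) + B) ** C = A ** C + B ** C"
  by (simp add: vec_eq_iff matrix_matrix_mult_def sum.distrib distrib_right)

lemma matrix_diff_ldistrib: "(A::'a::ring_1^'n^'m) ** (B - C) = A ** B - A ** C"
  by (simp add: vec_eq_iff matrix_matrix_mult_def sum_subtractf right_diff_distrib)

lemma matrix_diff_rdistrib: "((A::'a::ring_1^'n^'m) - B) ** C = A ** C - B ** C"
  by (simp add: vec_eq_iff matrix_matrix_mult_def sum_subtractf left_diff_distrib)

lemma matrix_mul_scaleR_right: "(A::real^'n^'m) ** (c *\<^sub>R B) = c *\<^sub>R (A ** B)"
  by (simp add: vec_eq_iff matrix_matrix_mult_def sum_distrib_left algebra_simps)

lemma matrix_mul_scaleR_left: "(c *\<^sub>R (A::real^'n^'m)) ** B = c *\<^sub>R (A ** B)"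
  by (simp add: vec_eq_iff matrix_matrix_mult_def sum_distrib_left algebra_simps)

lemma matrix_sum_ldistrib: "(A::real^'n^'m) ** sum f S = (\<Sum>l\<in>S. A ** f l)"
  by (induction S rule: infinite_finite_induct) (simp_all add: matrix_add_ldistrib)

lemma matrix_sum_rdistrib: "sum f S ** (A::real^'n^'m) = (\<Sum>l\<in>S. f l ** A)"
  by (induction S rule: infinite_finite_induct) (simp_all add: matrix_add_rdistrib)

lemma transpose_add: "transpose ((A::'a::semiring_1^'n^'m) + B) = transpose A + transpose B"
  by (simp add: vec_eq_iff transpose_def)

lemma transpose_diff: "transpose ((A::'a::ring_1^'n^'m) - B) = transpose A - transpose B"
  by (simp add: vec_eq_iff transpose_def)

lemma transpose_uminus: "transpose (- (A::'a::ring_1^'n^'m)) = - transpose A"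
  by (simp add: vec_eq_iff transpose_def)

lemma transpose_zero: "transpose (0::'a::semiring_1^'n^'m) = 0"
  by (simp add: vec_eq_iff transpose_def)

lemma transpose_sum: "transpose (sum f S) = (\<Sum>l\<in>S. transpose (f l :: real^'n^'m))"
  by (induction S rule: infinite_finite_induct) (simp_all add: transpose_add transpose_zero)

lemma trace_uminus: "trace (- (A::'a::comm_ring_1^'n^'n)) = - trace A"
  by (simp add: trace_def sum_negf)

lemma trace_scaleR: "trace (c *\<^sub>R (A::real^'n^'n)) = c * trace A"
  by (simp add: trace_def sum_distrib_left)

lemmas matrix_ring_simps = matrix_mul_uminus_right matrix_mul_uminus_left matrix_add_ldistrib
  matrix_add_rdistrib matrix_diff_ldistrib matrix_diff_rdistrib matrix_mul_scaleR_right
  matrix_mul_scaleR_left transpose_add transpose_diff transpose_uminus transpose_scalar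
  transpose_zero matrix_transpose_mul

lemma matrix_vector_mult_uminus_left: "(- A) *v (x::'a::ring_1^'n) = - (A *v x)"
  by (simp add: vec_eq_iff matrix_vector_mult_def sum_negf)

lemma matrix_vector_mult_uminus_right: "(A::'a::ring_1^'n^'m) *v (- x) = - (A *v x)"
  by (simp add: vec_eq_iff matrix_vector_mult_def sum_negf)

lemma vector_matrix_mult_uminus_left: "(- x) v* (A::'a::ring_1^'n^'m) = - (x v* A)"
  by (simp add: vec_eq_iff vector_matrix_mult_def sum_negf)

lemma inner_matrix_vector_mult_left: "(A *v x) \<bullet> z = x \<bullet> (transpose A *v (z::real^'n))"
  by (metis dot_lmul_matrix vector_transpose_matrix)

lemma matrix_mul_neg_cancel: "A ** B = - mat 1 \<Longrightarrow> X ** A ** B = - (X::'a::ring_1^'n^'m)"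
  by (metis matrix_mul_assoc matrix_mul_rid matrix_mul_uminus_right)

section \<open>Hermitian complex structures on a Euclidean vector space\<close>

definition metric_matrix :: "real^'n^'n \<Rightarrow> bool" where
  "metric_matrix G \<longleftrightarrow> transpose G = G \<and> (\<forall>v. v \<noteq> 0 \<longrightarrow> 0 < v \<bullet> (G *v v))"

definition hermitian_cs :: "real^'n^'n \<Rightarrow> real^'n^'n \<Rightarrow> bool" where
  "hermitian_cs G A \<longleftrightarrow> A ** A = - mat 1 \<and> transpose A ** G ** A = G"

lemma hermitian_cs_transpose_mult:
  assumes "hermitian_cs G A"
  shows "transpose A ** G = - (G ** A)"
proof -
  have "transpose A ** G ** (A ** A) = (transpose A ** G ** A) ** A"
    by (simp only: matrix_mul_assoc)
  then have "transpose A ** G ** (A ** A) = G ** A"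
    using assms by (simp add: hermitian_cs_def)
  moreover have "transpose A ** G ** (A ** A) = - (transpose A ** G)"
    using assms by (simp add: hermitian_cs_def matrix_mul_uminus_right)
  ultimately show ?thesis by (metis minus_minus)
qed

lemma hermitian_cs_orthogonal_transpose:
  assumes "hermitian_cs (mat 1) A"
  shows "transpose A = - A"
  using hermitian_cs_transpose_mult[OF assms] by simp

lemma metric_matrix_inverse:
  assumes "metric_matrix G"
  shows "matrix_inv G ** G = mat 1" "G ** matrix_inv G = mat 1"
    "transpose (matrix_inv G) = matrix_inv G"
proof -
  have "inj ((*v) G)"
  proof (rule injI)
    fix v w assume "G *v v = G *v w"
    then have "(v - w) \<bullet> (G *v (v - w)) = 0" by (simp add: matrix_vector_mult_diff_distrib)
    then show "v = w" using assms by (metis metric_matrix_def less_irrefl right_minus_eq)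
  qed
  then obtain B where "B ** G = mat 1"
    using matrix_left_invertible_injective by blast
  then have "invertible G"
    using invertible_left_inverse by blast
  then have "G ** matrix_inv G = mat 1 \<and> matrix_inv G ** G = mat 1"
    unfolding invertible_def matrix_inv_def by (rule someI_ex)
  then show "matrix_inv G ** G = mat 1" and r: "G ** matrix_inv G = mat 1" by auto
  have left: "transpose (matrix_inv G) ** G = mat 1"
    using r assms unfolding metric_matrix_def by (metis matrix_transpose_mul transpose_mat)
  have "transpose (matrix_inv G) = transpose (matrix_inv G) ** (G ** matrix_inv G)"
    using r by simp
  also have "\<dots> = matrix_inv G"
    using left by (simp add: matrix_mul_assoc)
  finally show "transpose (matrix_inv G) = matrix_inv G" .
qed

definition gform :: "real^'n^'n \<Rightarrow> real^'n \<Rightarrow> real^'n \<Rightarrow> real" where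
  "gform G x y = x \<bullet> (G *v y)"

lemma gform_add_left: "gform G (x + y) z = gform G x z + gform G y z"
  by (simp add: gform_def inner_add_left)
lemma gform_diff_left: "gform G (x - y) z = gform G x z - gform G y z"
  by (simp add: gform_def inner_diff_left)
lemma gform_scaleR_left: "gform G (c *\<^sub>R x) z = c * gform G x z"
  by (simp add: gform_def)
lemma gform_add_right: "gform G z (x + y) = gform G z x + gform G z y"
  by (simp add: gform_def inner_add_right matrix_vector_right_distrib)
lemma gform_diff_right: "gform G z (x - y) = gform G z x - gform G z y"
  by (simp add: gform_def inner_diff_right matrix_vector_mult_diff_distrib)
lemma gform_scaleR_right: "gform G z (c *\<^sub>R x) = c * gform G z x"
  by (simp add: gform_def matrix_vector_mult_scaleR)

lemmas gform_linear = gform_add_left gform_diff_left gform_scaleR_left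
  gform_add_right gform_diff_right gform_scaleR_right

lemma gform_commute:
  assumes "transpose G = G"
  shows "gform G x y = gform G y x"
proof -
  have "gform G x y = (x v* G) \<bullet> y" by (simp add: gform_def dot_lmul_matrix)
  also have "x v* G = G *v x" by (metis assms transpose_matrix_vector)
  finally show ?thesis by (simp add: gform_def inner_commute)
qed

lemma gform_hermitian_cs:
  assumes "hermitian_cs G A"
  shows "gform G (A *v x) (A *v y) = gform G x y"
proof -
  have "gform G (A *v x) (A *v y) = x \<bullet> (transpose A *v (G *v (A *v y)))"
    unfolding gform_def by (rule inner_matrix_vector_mult_left)
  also have "transpose A *v (G *v (A *v y)) = (transpose A ** G ** A) *v y"
    by (simp only: matrix_vector_mul_assoc matrix_mul_assoc)
  finally show ?thesis
    using assms by (simp add: hermitian_cs_def gform_def)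
qed

lemma gform_hermitian_cs_swap:
  assumes "hermitian_cs G A"
  shows "gform G (A *v x) y = - gform G x (A *v y)"
proof -
  have "gform G (A *v x) y = gform G (A *v (A *v x)) (A *v y)"
    using gform_hermitian_cs[OF assms] by simp
  also have "A *v (A *v x) = - x"
    using assms by (simp add: hermitian_cs_def matrix_vector_mul_assoc matrix_vector_mult_uminus_left)
  finally show ?thesis by (simp add: gform_def)
qed

lemma gform_hermitian_cs_self:
  "transpose G = G \<Longrightarrow> hermitian_cs G A \<Longrightarrow> gform G x (A *v x) = 0"
  using gform_hermitian_cs_swap[of G A x x] gform_commute[of G x "A *v x"] by simp

lemma gform_normalize:
  assumes "metric_matrix G" "v \<noteq> 0"
  shows "gform G ((1 / sqrt (gform G v v)) *\<^sub>R v) ((1 / sqrt (gform G v v)) *\<^sub>R v) = 1"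
proof -
  have "gform G v v > 0" using assms by (simp add: metric_matrix_def gform_def)
  then show ?thesis by (simp add: gform_linear real_sqrt_mult[symmetric])
qed

definition pullback3 :: "real^'n^'n \<Rightarrow> ('n \<Rightarrow> 'n \<Rightarrow> 'n \<Rightarrow> real) \<Rightarrow> 'n \<Rightarrow> 'n \<Rightarrow> 'n \<Rightarrow> real"
  where "pullback3 P T i j k = (\<Sum>a\<in>UNIV. \<Sum>b\<in>UNIV. \<Sum>c\<in>UNIV. T a b c * P$a$i * P$b$j * P$c$k)"

definition pull1 :: "real^'n^'n \<Rightarrow> ('n \<Rightarrow> 'n \<Rightarrow> 'n \<Rightarrow> real) \<Rightarrow> 'n \<Rightarrow> 'n \<Rightarrow> 'n \<Rightarrow> real"
  where "pull1 P T = (\<lambda>i b c. \<Sum>a\<in>UNIV. T a b c * P$a$i)"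

definition pull2 :: "real^'n^'n \<Rightarrow> ('n \<Rightarrow> 'n \<Rightarrow> 'n \<Rightarrow> real) \<Rightarrow> 'n \<Rightarrow> 'n \<Rightarrow> 'n \<Rightarrow> real"
  where "pull2 P T = (\<lambda>a j c. \<Sum>b\<in>UNIV. T a b c * P$b$j)"

definition pull3 :: "real^'n^'n \<Rightarrow> ('n \<Rightarrow> 'n \<Rightarrow> 'n \<Rightarrow> real) \<Rightarrow> 'n \<Rightarrow> 'n \<Rightarrow> 'n \<Rightarrow> real"
  where "pull3 P T = (\<lambda>a b k. \<Sum>c\<in>UNIV. T a b c * P$c$k)"

lemma pullback3_eq_pulls: "pullback3 P T = pull1 P (pull2 P (pull3 P T))"
  by (simp add: fun_eq_iff pullback3_def pull1_def pull2_def pull3_def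
      sum_distrib_right sum_distrib_left mult_ac)

lemma pull1_pull1: "pull1 B (pull1 A T) = pull1 (A ** B) T"
  by (simp add: fun_eq_iff pull1_def matrix_matrix_mult_def sum_distrib_right sum_distrib_left
      mult.assoc) (subst sum.swap, simp)

lemma pull2_pull2: "pull2 B (pull2 A T) = pull2 (A ** B) T"
  by (simp add: fun_eq_iff pull2_def matrix_matrix_mult_def sum_distrib_right sum_distrib_left
      mult.assoc) (subst sum.swap, simp)

lemma pull3_pull3: "pull3 B (pull3 A T) = pull3 (A ** B) T"
  by (simp add: fun_eq_iff pull3_def matrix_matrix_mult_def sum_distrib_right sum_distrib_left
      mult.assoc) (subst sum.swap, simp)

lemma pull2_pull1: "pull2 Q (pull1 P T) = pull1 P (pull2 Q T)"
  by (simp add: fun_eq_iff pull1_def pull2_def sum_distrib_right) (subst sum.swap, simp add: mult_ac)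

lemma pull3_pull1: "pull3 Q (pull1 P T) = pull1 P (pull3 Q T)"
  by (simp add: fun_eq_iff pull1_def pull3_def sum_distrib_right) (subst sum.swap, simp add: mult_ac)

lemma pull3_pull2: "pull3 Q (pull2 P T) = pull2 P (pull3 Q T)"
  by (simp add: fun_eq_iff pull2_def pull3_def sum_distrib_right) (subst sum.swap, simp add: mult_ac)

lemma pullback3_pullback3: "pullback3 B (pullback3 A T) = pullback3 (A ** B) T"
  by (simp only: pullback3_eq_pulls pull2_pull1 pull3_pull1 pull3_pull2
      pull1_pull1 pull2_pull2 pull3_pull3)

lemma pullback3_mat1: "pullback3 (mat 1) T = T"
  by (simp add: fun_eq_iff pullback3_def mat_def if_distrib[where f="\<lambda>x. _ * x"] cong: if_cong)

lemma pullback3_uminus_matrix: "pullback3 (- P) T = (\<lambda>i j k. - pullback3 P T i j k)"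
  by (simp add: fun_eq_iff pullback3_def sum_negf[symmetric])

lemma pullback3_uminus: "pullback3 P (\<lambda>i j k. - T i j k) = (\<lambda>i j k. - pullback3 P T i j k)"
  by (simp add: fun_eq_iff pullback3_def sum_negf[symmetric])

lemma pullback3_add:
  "pullback3 P (\<lambda>a b c. T a b c + S a b c) i j k = pullback3 P T i j k + pullback3 P S i j k"
  by (simp add: pullback3_def distrib_right sum.distrib)

lemma sum3_rotate:
  "(\<Sum>a\<in>(UNIV::'a::finite set). \<Sum>b\<in>(UNIV::'b::finite set). \<Sum>c\<in>(UNIV::'c::finite set).
      F a b c :: real) = (\<Sum>b\<in>UNIV. \<Sum>c\<in>UNIV. \<Sum>a\<in>UNIV. F a b c)"
  by (subst sum.swap) (rule sum.cong[OF refl sum.swap])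

lemma pullback3_rotate: "pullback3 P (\<lambda>a b c. T b c a) i j k = pullback3 P T j k i"
  unfolding pullback3_def by (subst sum3_rotate) (simp add: mult_ac)

lemma pullback3_mult:
  "pullback3 P (\<lambda>a b c. f a * h b c) i j k
     = (\<Sum>a\<in>UNIV. f a * P$a$i) * (\<Sum>b\<in>UNIV. \<Sum>c\<in>UNIV. h b c * P$b$j * P$c$k)"
  by (simp add: pullback3_def sum_distrib_left sum_distrib_right) (subst sum3_rotate, simp add: mult_ac)

lemma transpose_mult_mult_entry:
  "(transpose P ** M ** (P::real^'n^'n)) $ j $ k = (\<Sum>b\<in>UNIV. \<Sum>c\<in>UNIV. M$b$c * P$b$j * P$c$k)"
  by (simp add: matrix_matrix_mult_def transpose_def sum_distrib_left sum_distrib_right mult_ac)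
     (rule trans[OF sum.swap], intro sum.cong refl, simp add: mult_ac)

lemma pullback3_wedge12:
  "pullback3 P (wedge12 th om) = wedge12 (th v* P) (transpose P ** om ** P)"
proof (intro ext)
  fix i j k
  let ?w = "\<lambda>a b c. th$a * om$b$c"
  have "pullback3 P (wedge12 th om) i j k = pullback3 P ?w i j k
     + pullback3 P (\<lambda>a b c. ?w b c a) i j k + pullback3 P (\<lambda>a b c. ?w c a b) i j k"
    unfolding wedge12_def by (simp add: pullback3_add[symmetric])
  also have "\<dots> = pullback3 P ?w i j k + pullback3 P ?w j k i + pullback3 P ?w k i j"
    by (simp only: pullback3_rotate[of P ?w] pullback3_rotate[of P "\<lambda>a b c. ?w b c a"])
  finally show "pullback3 P (wedge12 th om) i j k = wedge12 (th v* P) (transpose P ** om ** P) i j k"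
    by (simp add: wedge12_def pullback3_mult transpose_mult_mult_entry vector_matrix_mult_def)
qed

lemma dc2_eq_pullback3: "dc2 A om x i j k = - pullback3 (A x) (d2 om x) i j k"
  by (simp add: dc2_def pullback3_def)

section \<open>Pairs of Hermitian complex structures in dimension four\<close>

definition I0 :: "real^4^4" where
  "I0 = (\<chi> i j. if (i = 2 \<and> j = 1) \<or> (i = 4 \<and> j = 3) then 1
                else if (i = 1 \<and> j = 2) \<or> (i = 3 \<and> j = 4) then -1 else 0)"

lemma I0_entries:
  "I0$1$1 = 0" "I0$1$2 = -1" "I0$1$3 = 0" "I0$1$4 = 0"
  "I0$2$1 = 1" "I0$2$2 = 0" "I0$2$3 = 0" "I0$2$4 = 0"
  "I0$3$1 = 0" "I0$3$2 = 0" "I0$3$3 = 0" "I0$3$4 = -1"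
  "I0$4$1 = 0" "I0$4$2 = 0" "I0$4$3 = 1" "I0$4$4 = 0"
  by (simp_all add: I0_def)

text \<open>For \<open>a\<^sup>2 + b\<^sup>2 + c\<^sup>2 = 1\<close> these are the orthogonal complex structures inducing the
  orientation of \<^const>\<open>I0\<close>; \<open>a\<close> is their angle with it.\<close>

definition Jabc :: "real \<Rightarrow> real \<Rightarrow> real \<Rightarrow> real^4^4" where
  "Jabc a b c = (\<chi> i j.
     if i = 1 \<and> j = 2 then a else if i = 1 \<and> j = 3 then b else if i = 1 \<and> j = 4 then c
     else if i = 2 \<and> j = 1 then -a else if i = 2 \<and> j = 3 then c else if i = 2 \<and> j = 4 then -b
     else if i = 3 \<and> j = 1 then -b else if i = 3 \<and> j = 2 then -c else if i = 3 \<and> j = 4 then a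
     else if i = 4 \<and> j = 1 then -c else if i = 4 \<and> j = 2 then b else if i = 4 \<and> j = 3 then -a
     else 0)"

lemma Jabc_entries:
  "Jabc a b c$1$1 = 0" "Jabc a b c$1$2 = a" "Jabc a b c$1$3 = b" "Jabc a b c$1$4 = c"
  "Jabc a b c$2$1 = -a" "Jabc a b c$2$2 = 0" "Jabc a b c$2$3 = c" "Jabc a b c$2$4 = -b"
  "Jabc a b c$3$1 = -b" "Jabc a b c$3$2 = -c" "Jabc a b c$3$3 = 0" "Jabc a b c$3$4 = a"
  "Jabc a b c$4$1 = -c" "Jabc a b c$4$2 = b" "Jabc a b c$4$3 = -a" "Jabc a b c$4$4 = 0"
  by (simp_all add: Jabc_def)

lemma I0_mult_Jabc:
  "I0 ** Jabc a b c = (\<chi> i j.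
     if i = 1 \<and> j = 1 then a else if i = 1 \<and> j = 2 then 0 else if i = 1 \<and> j = 3 then -c
     else if i = 1 \<and> j = 4 then b else if i = 2 \<and> j = 1 then 0 else if i = 2 \<and> j = 2 then a
     else if i = 2 \<and> j = 3 then b else if i = 2 \<and> j = 4 then c else if i = 3 \<and> j = 1 then c
     else if i = 3 \<and> j = 2 then -b else if i = 3 \<and> j = 3 then a else if i = 3 \<and> j = 4 then 0
     else if i = 4 \<and> j = 1 then -b else if i = 4 \<and> j = 2 then -c else if i = 4 \<and> j = 3 then 0
     else a)"
  by (simp add: vec_eq_iff forall_4 matrix_matrix_mult_def sum_4 I0_entries Jabc_entries)

lemma anticommutator_I0_Jabc: "I0 ** Jabc a b c + Jabc a b c ** I0 = (2 * a) *\<^sub>R mat 1"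
  by (simp add: vec_eq_iff forall_4 matrix_matrix_mult_def sum_4 I0_entries Jabc_entries mat_def)

lemma trace_I0_Jabc: "trace (I0 ** Jabc a b c) = 4 * a"
  by (simp add: trace_def sum_4 I0_mult_Jabc)

lemma pullback3_I0_Jabc_wedge12:
  assumes "a * a + b * b + c * c = 1"
  shows "pullback3 (I0 ** Jabc a b c) (wedge12 th I0) = wedge12 (- th) (Jabc a b c)"
  unfolding fun_eq_iff forall_4
  by (simp add: pullback3_def I0_mult_Jabc sum_4 wedge12_def I0_entries Jabc_entries)
     (intro conjI; use assms in algebra)

text \<open>An orthogonal complex structure on \<open>\<real>\<^sup>4\<close> is skew, so it has six entries; \<open>J\<^sup>2 = -1\<close>
  factors into the products below, which force the form \<^const>\<open>Jabc\<close> unless \<open>J\<close> commutes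
  with \<^const>\<open>I0\<close>.\<close>

lemma Jabc_normal_form:
  assumes herm: "hermitian_cs (mat 1) J" and nondeg: "det (I0 ** J - J ** I0) \<noteq> 0"
  shows "J = Jabc (J$1$2) (J$1$3) (J$1$4)" "(J$1$2)\<^sup>2 + (J$1$3)\<^sup>2 + (J$1$4)\<^sup>2 = 1"
proof -
  have skew: "J$j$i = - J$i$j" for i j
    using arg_cong[OF hermitian_cs_orthogonal_transpose[OF herm], of "\<lambda>M. M$i$j"]
    by (simp add: transpose_def)
  define a where "a = J$1$2"
  define b where "b = J$1$3"
  define c where "c = J$1$4"
  define d where "d = J$2$3"
  define e where "e = J$2$4"
  define f where "f = J$3$4"
  have entries: "J$1$1 = 0" "J$1$2 = a" "J$1$3 = b" "J$1$4 = c"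
    "J$2$1 = -a" "J$2$2 = 0" "J$2$3 = d" "J$2$4 = e"
    "J$3$1 = -b" "J$3$2 = -d" "J$3$3 = 0" "J$3$4 = f"
    "J$4$1 = -c" "J$4$2 = -e" "J$4$3 = -f" "J$4$4 = 0"
    using skew[of 1 1] skew[of 2 2] skew[of 3 3] skew[of 4 4] skew[of 1 2] skew[of 1 3]
      skew[of 1 4] skew[of 2 3] skew[of 2 4] skew[of 3 4]
    by (simp_all add: a_def b_def c_def d_def e_def f_def)
  have sq: "(J ** J)$i$j = (- mat 1 :: real^4^4)$i$j" for i j
    using herm by (simp add: hermitian_cs_def)
  have eqs: "a*a + b*b + c*c = 1" "a*a + d*d + e*e = 1" "b*b + d*d + f*f = 1" "c*c + e*e + f*f = 1"
    "b*d + c*e = 0" "a*d - c*f = 0" "a*e + b*f = 0" "a*b + e*f = 0" "a*c - d*f = 0" "b*c + d*e = 0"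
    using sq[of 1 1] sq[of 2 2] sq[of 3 3] sq[of 4 4] sq[of 1 2] sq[of 1 3] sq[of 1 4]
      sq[of 2 3] sq[of 2 4] sq[of 3 4]
    by (simp_all add: matrix_matrix_mult_def sum_4 entries mat_def algebra_simps)
  have "c + d \<noteq> 0 \<or> b - e \<noteq> 0"
  proof (rule ccontr)
    assume "\<not> ?thesis"
    then have "I0 ** J - J ** I0 = 0"
      by (simp add: vec_eq_iff forall_4 matrix_matrix_mult_def sum_4 entries I0_entries)
    then show False
      using nondeg by (metis det_0 mat_0)
  qed
  moreover have "(c + d) * (a - f) = 0" "(c + d) * (b + e) = 0" "(c + d) * (c - d) = 0"
    "(b - e) * (a - f) = 0" "(b - e) * (b + e) = 0" "(b - e) * (c - d) = 0"
    using eqs by (simp_all add: algebra_simps)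
  ultimately have "a = f" "b = - e" "c = d"
    by auto
  then show "J = Jabc (J$1$2) (J$1$3) (J$1$4)"
    by (simp add: vec_eq_iff forall_4 Jabc_entries entries)
  show "(J$1$2)\<^sup>2 + (J$1$3)\<^sup>2 + (J$1$4)\<^sup>2 = 1"
    using eqs(1) by (simp add: entries power2_eq_square)
qed

lemma exists_not_in_span_pair: "\<exists>w::real^4. w \<notin> span {u, v}"
proof (rule ccontr)
  assume "\<nexists>w::real^4. w \<notin> span {u, v}"
  then have "dim (UNIV :: (real^4) set) \<le> card {u, v}"
    by (intro dim_le_card) auto
  also have "\<dots> \<le> 2"
    by (simp add: card_insert_le_m1)
  finally show False
    by simp
qed

lemma exists_orthonormal_pair:
  fixes G A :: "real^4^4"
  assumes metric: "metric_matrix G" and herm: "hermitian_cs G A"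
  obtains e1 e3 where "gform G e1 e1 = 1" "gform G e3 e3 = 1" "gform G e1 e3 = 0"
    "gform G (A *v e1) e3 = 0"
proof -
  have sym: "gform G x y = gform G y x" for x y
    using metric gform_commute by (auto simp: metric_matrix_def)
  define e1 :: "real^4" where "e1 = (1 / sqrt (gform G (axis 1 1) (axis 1 1))) *\<^sub>R axis 1 1"
  have g11: "gform G e1 e1 = 1"
    unfolding e1_def by (rule gform_normalize[OF metric]) simp
  define e2 where "e2 = A *v e1"
  have g22: "gform G e2 e2 = 1"
    using g11 gform_hermitian_cs[OF herm] by (simp add: e2_def)
  have g12: "gform G e1 e2 = 0"
    using gform_hermitian_cs_self[of G A e1] metric herm by (simp add: e2_def metric_matrix_def)
  obtain w where w: "w \<notin> span {e1, e2}"
    using exists_not_in_span_pair by blast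
  define f where "f = w - gform G e1 w *\<^sub>R e1 - gform G e2 w *\<^sub>R e2"
  have "f \<noteq> 0"
  proof
    assume "f = 0"
    then have "w = gform G e1 w *\<^sub>R e1 + gform G e2 w *\<^sub>R e2"
      by (simp add: f_def algebra_simps)
    then have "w \<in> span {e1, e2}"
      by (metis span_add span_base span_scale insertI1 insertI2 singletonI)
    then show False using w by simp
  qed
  have f1: "gform G e1 f = 0" and f2: "gform G e2 f = 0"
    using g11 g22 g12 by (simp_all add: f_def gform_linear sym[of e2 e1])
  define e3 where "e3 = (1 / sqrt (gform G f f)) *\<^sub>R f"
  show thesis
  proof (rule that[of e1 e3])
    show "gform G e1 e1 = 1" by (fact g11)
    show "gform G e3 e3 = 1" unfolding e3_def by (rule gform_normalize[OF metric \<open>f \<noteq> 0\<close>])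
    show "gform G e1 e3 = 0" "gform G (A *v e1) e3 = 0"
      using f1 f2 by (simp_all add: e3_def e2_def gform_linear)
  qed
qed

lemma unitary_frame_exists:
  fixes G A :: "real^4^4"
  assumes metric: "metric_matrix G" and herm: "hermitian_cs G A"
  obtains P where "transpose P ** G ** P = mat 1" "A ** P = P ** I0"
proof -
  obtain e1 e3 where g11: "gform G e1 e1 = 1" and g33: "gform G e3 e3 = 1"
    and g13: "gform G e1 e3 = 0" and g23: "gform G (A *v e1) e3 = 0"
    using exists_orthonormal_pair[OF metric herm] by blast
  have sym: "gform G x y = gform G y x" for x y
    using metric gform_commute by (auto simp: metric_matrix_def)
  have AA: "A *v (A *v x) = - x" for x
    using herm by (simp add: hermitian_cs_def matrix_vector_mul_assoc matrix_vector_mult_uminus_left)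
  define e :: "4 \<Rightarrow> real^4" where
    "e = (\<lambda>i. if i = 1 then e1 else if i = 2 then A *v e1 else if i = 3 then e3 else A *v e3)"
  have gram: "\<forall>i j. gform G (e i) (e j) = mat 1 $ i $ j"
  proof -
    have "gform G (A *v e1) (A *v e1) = 1" "gform G (A *v e3) (A *v e3) = 1"
      "gform G (A *v e1) (A *v e3) = 0" "gform G e1 (A *v e1) = 0" "gform G e3 (A *v e3) = 0"
      "gform G e1 (A *v e3) = 0"
      using g11 g33 g13 g23 gform_hermitian_cs[OF herm] gform_hermitian_cs_swap[OF herm, of e1 e3]
        gform_hermitian_cs_self[OF _ herm] metric
      by (simp_all add: metric_matrix_def)
    then show ?thesis
      using g11 g33 g13 g23 sym[of e1 e3] sym[of e1 "A *v e1"] sym[of e3 "A *v e3"]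
        sym[of e1 "A *v e3"] sym[of "A *v e1" e3] sym[of "A *v e1" "A *v e3"]
      by (simp add: forall_4 e_def mat_def)
  qed
  define P where "P = (\<chi> i j. e j $ i)"
  show thesis
  proof (rule that[of P])
    have "(transpose P ** G ** P) $ i $ j = gform G (e i) (e j)" for i j
      by (simp add: P_def gform_def matrix_matrix_mult_def transpose_def inner_vec_def
          matrix_vector_mult_def sum_4 algebra_simps)
    then show "transpose P ** G ** P = mat 1"
      using gram by (simp add: vec_eq_iff)
    have "(A ** P) $ i $ j = (A *v e j) $ i" for i j
      by (simp add: P_def matrix_matrix_mult_def matrix_vector_mult_def)
    moreover have "(P ** I0) $ i $ j = (\<Sum>k\<in>UNIV. e k $ i * I0 $ k $ j)" for i j
      by (simp add: P_def matrix_matrix_mult_def)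
    ultimately show "A ** P = P ** I0"
      by (simp add: vec_eq_iff forall_4 sum_4 e_def I0_entries AA)
  qed
qed

lemma similar_mult:
  assumes "Q ** P = mat 1"
  shows "(P ** A ** Q) ** (P ** B ** Q) = P ** (A ** B) ** (Q::'a::comm_ring_1^'n^'n)"
proof -
  have "(P ** A ** Q) ** (P ** B ** Q) = P ** A ** (Q ** P) ** B ** Q"
    by (simp only: matrix_mul_assoc)
  then show ?thesis
    using assms by (simp add: matrix_mul_assoc)
qed

lemma similar_trace:
  assumes "Q ** P = mat 1"
  shows "trace (P ** A ** Q) = trace (A::'a::comm_ring_1^'n^'n)"
proof -
  have "trace (P ** A ** Q) = trace (Q ** (P ** A))"
    by (rule trace_mul_sym)
  then show ?thesis
    using assms by (simp add: matrix_mul_assoc)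
qed

lemma similar_eq:
  assumes "A ** P = P ** B" "P ** Q = mat 1"
  shows "A = P ** B ** (Q::'a::comm_ring_1^'n^'n)"
proof -
  have "A = A ** P ** Q"
    using assms(2) by (simp flip: matrix_mul_assoc)
  then show ?thesis
    using assms(1) by simp
qed

lemma hermitian_cs_orthonormal_frame:
  fixes G P J :: "real^'n^'n"
  assumes metric: "metric_matrix G" and PGP: "transpose P ** G ** P = mat 1"
    and herm: "hermitian_cs G J"
  shows "hermitian_cs (mat 1) (transpose P ** G ** J ** P)"
proof -
  define Q where "Q = transpose P ** G"
  have QP: "Q ** P = mat 1" using PGP by (simp add: Q_def)
  then have PQ: "P ** Q = mat 1" using matrix_left_right_inverse by blast
  have "transpose Q = G ** P"
    using metric by (simp add: Q_def matrix_transpose_mul metric_matrix_def)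
  then have "transpose (Q ** J ** P) ** (Q ** J ** P)
      = transpose P ** (transpose J ** (G ** (P ** Q)) ** J) ** P"
    by (simp add: matrix_transpose_mul matrix_mul_assoc)
  then have orth: "transpose (Q ** J ** P) ** (Q ** J ** P) = mat 1"
    using PQ PGP herm by (simp add: hermitian_cs_def)
  have "(Q ** J ** P) ** (Q ** J ** P) = Q ** (J ** (P ** Q) ** J) ** P"
    by (simp add: matrix_mul_assoc)
  then have "(Q ** J ** P) ** (Q ** J ** P) = - mat 1"
    using PQ QP herm by (simp add: hermitian_cs_def matrix_mul_uminus_right matrix_mul_uminus_left)
  with orth show ?thesis
    by (simp add: hermitian_cs_def Q_def)
qed

lemma nondegenerate_pair_frame:
  fixes G I J :: "real^4^4"
  assumes metric: "metric_matrix G" and hI: "hermitian_cs G I" and hJ: "hermitian_cs G J"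
    and nondeg: "det (I ** J - J ** I) \<noteq> 0"
  obtains P Q a b c where "transpose P ** G ** P = mat 1" "Q ** P = mat 1" "P ** Q = mat 1"
    "I ** P = P ** I0" "J ** P = P ** Jabc a b c" "a * a + b * b + c * c = 1"
proof -
  obtain P where PGP: "transpose P ** G ** P = mat 1" and IP: "I ** P = P ** I0"
    using unitary_frame_exists[OF metric hI] by blast
  define Q where "Q = transpose P ** G"
  have QP: "Q ** P = mat 1" using PGP by (simp add: Q_def)
  then have PQ: "P ** Q = mat 1" using matrix_left_right_inverse by blast
  define J' where "J' = Q ** J ** P"
  have JP: "J ** P = P ** J'"
    using PQ by (simp add: J'_def matrix_mul_assoc)
  have I: "I = P ** I0 ** Q" and J: "J = P ** J' ** Q"
    using similar_eq[OF IP PQ] similar_eq[OF JP PQ] by simp_all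
  have "hermitian_cs (mat 1) J'"
    unfolding J'_def Q_def by (rule hermitian_cs_orthonormal_frame[OF metric PGP hJ])
  moreover have "det (I0 ** J' - J' ** I0) \<noteq> 0"
  proof -
    have "I ** J - J ** I = P ** (I0 ** J' - J' ** I0) ** Q"
      unfolding I J similar_mult[OF QP] by (simp add: matrix_diff_ldistrib matrix_diff_rdistrib)
    then show ?thesis
      using nondeg by (auto simp: det_mul)
  qed
  ultimately have "J' = Jabc (J'$1$2) (J'$1$3) (J'$1$4)"
    and "(J'$1$2)\<^sup>2 + (J'$1$3)\<^sup>2 + (J'$1$4)\<^sup>2 = 1"
    using Jabc_normal_form by blast+
  then show thesis
    using that[OF PGP QP PQ IP, of "J'$1$2" "J'$1$3" "J'$1$4"] JP by (metis power2_eq_square)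
qed

text \<open>Two Hermitian complex structures with invertible commutator induce the same orientation
  of \<open>\<real>\<^sup>4\<close>, so they anticommute up to a multiple of the identity.\<close>

lemma anticommutator_nondegenerate:
  fixes G I J :: "real^4^4"
  assumes "metric_matrix G" "hermitian_cs G I" "hermitian_cs G J" "det (I ** J - J ** I) \<noteq> 0"
  shows "I ** J + J ** I = (trace (I ** J) / 2) *\<^sub>R mat 1"
proof -
  obtain P Q a b c where "transpose P ** G ** P = mat 1" and QP: "Q ** P = mat 1"
    and PQ: "P ** Q = mat 1" and IP: "I ** P = P ** I0" and JP: "J ** P = P ** Jabc a b c"
    and "a * a + b * b + c * c = 1"
    using nondegenerate_pair_frame[OF assms] by blast
  have I: "I = P ** I0 ** Q" and J: "J = P ** Jabc a b c ** Q"
    using similar_eq[OF IP PQ] similar_eq[OF JP PQ] by simp_all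
  have "trace (I ** J) = 4 * a"
    unfolding I J similar_mult[OF QP] similar_trace[OF QP] by (rule trace_I0_Jabc)
  moreover have "I ** J + J ** I = P ** ((2 * a) *\<^sub>R mat 1) ** Q"
    unfolding I J similar_mult[OF QP] anticommutator_I0_Jabc[of a b c, symmetric]
    by (simp add: matrix_add_ldistrib matrix_add_rdistrib)
  ultimately show ?thesis
    using PQ by (simp add: matrix_mul_scaleR_right matrix_mul_scaleR_left)
qed

lemma pullback3_wedge12_nondegenerate:
  fixes G I J :: "real^4^4"
  assumes "metric_matrix G" "hermitian_cs G I" "hermitian_cs G J" "det (I ** J - J ** I) \<noteq> 0"
  shows "pullback3 (I ** J) (wedge12 th (G ** I)) = wedge12 (- th) (G ** J)"
proof -
  obtain P Q a b c where PGP: "transpose P ** G ** P = mat 1" and "Q ** P = mat 1"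
    and PQ: "P ** Q = mat 1" and IP: "I ** P = P ** I0" and JP: "J ** P = P ** Jabc a b c"
    and abc: "a * a + b * b + c * c = 1"
    using nondegenerate_pair_frame[OF assms] by blast
  have frame: "pullback3 P (wedge12 v (G ** A)) = wedge12 (v v* P) A'"
    if "A ** P = P ** A'" for v A A'
  proof -
    have "transpose P ** (G ** A) ** P = transpose P ** G ** (A ** P)"
      by (simp only: matrix_mul_assoc)
    also have "\<dots> = transpose P ** G ** P ** A'"
      using that by (simp add: matrix_mul_assoc)
    finally
    show ?thesis using PGP by (simp add: pullback3_wedge12)
  qed
  have "I ** J ** P = I ** P ** Jabc a b c"
    using JP by (simp flip: matrix_mul_assoc)
  then have "I ** J ** P = P ** (I0 ** Jabc a b c)"
    using IP by (simp add: matrix_mul_assoc)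
  then have "pullback3 P (pullback3 (I ** J) (wedge12 th (G ** I)))
      = pullback3 (I0 ** Jabc a b c) (pullback3 P (wedge12 th (G ** I)))"
    by (simp add: pullback3_pullback3)
  also have "\<dots> = wedge12 (- th v* P) (Jabc a b c)"
    using pullback3_I0_Jabc_wedge12[OF abc] frame[OF IP]
    by (simp add: vector_matrix_mult_uminus_left)
  also have "\<dots> = pullback3 P (wedge12 (- th) (G ** J))"
    using frame[OF JP] by simp
  finally have "pullback3 Q (pullback3 P (pullback3 (I ** J) (wedge12 th (G ** I))))
      = pullback3 Q (pullback3 P (wedge12 (- th) (G ** J)))" by simp
  then show ?thesis
    using PQ by (simp add: pullback3_pullback3 pullback3_mat1 flip: matrix_mul_assoc)
qed

definition tmat :: "('n \<Rightarrow> real^'n^'n) \<Rightarrow> real^'n \<Rightarrow> real^'n^'n" where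
  "tmat T X = (\<Sum>l\<in>UNIV. X$l *\<^sub>R T l)"

definition tform :: "('n \<Rightarrow> real^'n^'n) \<Rightarrow> real^'n \<Rightarrow> real^'n \<Rightarrow> real^'n \<Rightarrow> real" where
  "tform T X Y Z = Y \<bullet> (tmat T X *v Z)"

definition tform3 :: "('n \<Rightarrow> 'n \<Rightarrow> 'n \<Rightarrow> real) \<Rightarrow> real^'n \<Rightarrow> real^'n \<Rightarrow> real^'n \<Rightarrow> real" where
  "tform3 D X Y Z = (\<Sum>a\<in>UNIV. \<Sum>b\<in>UNIV. \<Sum>c\<in>UNIV. D a b c * X$a * Y$b * Z$c)"

lemma sum_axis_mult: "(\<Sum>a\<in>UNIV. axis l (1::real) $ a * f a) = f l"
  by (simp add: axis_def if_distrib[where f="\<lambda>x. x * _"] cong: if_cong)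

lemma sum_mult_axis: "(\<Sum>a\<in>UNIV. f a * axis l (1::real) $ a) = f l"
  using sum_axis_mult[of l f] by (simp add: mult.commute)

lemma matrix_vector_mult_axis_nth: "((M::real^'n^'m) *v axis k 1) $ j = M $ j $ k"
  by (simp add: matrix_vector_mult_def sum_mult_axis)

lemma inner_axis_left: "axis j 1 \<bullet> (v::real^'n) = v $ j"
  by (simp add: inner_vec_def sum_axis_mult)

lemma tmat_axis: "tmat T (axis l 1) = T l"
  by (simp add: tmat_def axis_def if_distrib[where f="\<lambda>x. x *\<^sub>R _"] cong: if_cong)

lemma tmat_nth: "tmat T X $ s $ j = (\<Sum>m\<in>UNIV. X$m * T m $ s $ j)"
  by (simp add: tmat_def)

lemma tform_uminus2: "tform T X (- Y) Z = - tform T X Y Z"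
  by (simp add: tform_def)

lemma tform_uminus3: "tform T X Y (- Z) = - tform T X Y Z"
  by (simp add: tform_def matrix_vector_mult_uminus_right)

lemma tform_axis: "tform T (axis l 1) (axis j 1) (axis k 1) = T l $ j $ k"
  by (simp add: tform_def tmat_axis inner_axis_left matrix_vector_mult_axis_nth)

lemma tform_eq_sum:
  "tform T X Y Z = (\<Sum>a\<in>UNIV. \<Sum>b\<in>UNIV. \<Sum>c\<in>UNIV. T a $ b $ c * X$a * Y$b * Z$c)"
proof -
  have "tform T X Y Z = (\<Sum>b\<in>UNIV. \<Sum>c\<in>UNIV. \<Sum>a\<in>UNIV. T a $ b $ c * X$a * Y$b * Z$c)"
    by (simp add: tform_def tmat_def inner_vec_def matrix_vector_mult_def sum_distrib_left
        sum_distrib_right mult_ac)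
  also have "\<dots> = (\<Sum>a\<in>UNIV. \<Sum>b\<in>UNIV. \<Sum>c\<in>UNIV. T a $ b $ c * X$a * Y$b * Z$c)"
    by (rule sum3_rotate[symmetric])
  finally show ?thesis .
qed

lemma tform3_cyclic:
  assumes "\<forall>l j k. D l j k = T l $ j $ k + T j $ k $ l + T k $ l $ j"
  shows "tform3 D X Y Z = tform T X Y Z + tform T Y Z X + tform T Z X Y"
proof -
  have "tform3 D X Y Z = (\<Sum>a\<in>UNIV. \<Sum>b\<in>UNIV. \<Sum>c\<in>UNIV. T a $ b $ c * X$a * Y$b * Z$c)
      + (\<Sum>a\<in>UNIV. \<Sum>b\<in>UNIV. \<Sum>c\<in>UNIV. T b $ c $ a * X$a * Y$b * Z$c)
      + (\<Sum>a\<in>UNIV. \<Sum>b\<in>UNIV. \<Sum>c\<in>UNIV. T c $ a $ b * X$a * Y$b * Z$c)"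
    unfolding tform3_def by (simp add: assms[rule_format] sum.distrib distrib_right)
  also have "(\<Sum>a\<in>UNIV. \<Sum>b\<in>UNIV. \<Sum>c\<in>UNIV. T b $ c $ a * X$a * Y$b * Z$c) = tform T Y Z X"
    unfolding tform_eq_sum by (subst sum3_rotate) (simp add: mult_ac)
  also have "(\<Sum>a\<in>UNIV. \<Sum>b\<in>UNIV. \<Sum>c\<in>UNIV. T c $ a $ b * X$a * Y$b * Z$c) = tform T Z X Y"
    unfolding tform_eq_sum by (subst (2) sum3_rotate) (simp add: mult_ac)
  finally show ?thesis by (simp add: tform_eq_sum)
qed

lemma tform3_axis1: "tform3 D (axis l 1) Y Z = (\<Sum>b\<in>UNIV. \<Sum>c\<in>UNIV. D l b c * Y$b * Z$c)"
proof -
  have "tform3 D (axis l 1) Y Z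
      = (\<Sum>a\<in>UNIV. axis l 1 $ a * (\<Sum>b\<in>UNIV. \<Sum>c\<in>UNIV. D a b c * Y$b * Z$c))"
    by (simp add: tform3_def sum_distrib_left mult_ac)
  then show ?thesis by (simp only: sum_axis_mult)
qed

lemma tform_skew:
  assumes "\<forall>l. transpose (T l) = - T l"
  shows "tform T X Y Z = - tform T X Z Y"
proof -
  have "transpose (tmat T X) = - tmat T X"
    using assms by (simp add: tmat_def transpose_sum transpose_scalar sum_negf)
  moreover have "tform T X Y Z = Z \<bullet> (transpose (tmat T X) *v Y)"
    by (simp add: tform_def dot_lmul_matrix[symmetric] inner_commute)
  ultimately show ?thesis by (simp add: tform_def matrix_vector_mult_uminus_left)
qed

lemma tform_anti_invariant:
  assumes "\<forall>l. transpose A ** T l ** A = - T l"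
  shows "tform T X (A *v Y) (A *v Z) = - tform T X Y Z"
proof -
  have "transpose A ** tmat T X ** A = (\<Sum>l\<in>UNIV. X$l *\<^sub>R (transpose A ** T l ** A))"
    unfolding tmat_def
    by (simp add: matrix_sum_ldistrib matrix_sum_rdistrib matrix_mul_scaleR_right matrix_mul_scaleR_left)
  also have "\<dots> = - tmat T X"
    using assms by (simp add: tmat_def sum_negf)
  moreover have "tform T X (A *v Y) (A *v Z) = Y \<bullet> ((transpose A ** tmat T X ** A) *v Z)"
    unfolding tform_def by (simp add: inner_matrix_vector_mult_left matrix_vector_mul_assoc matrix_mul_assoc)
  ultimately show ?thesis
    by (simp add: tform_def matrix_vector_mult_uminus_left)
qed

lemma tform_swap_anti_invariant:
  assumes "\<forall>l. transpose A ** T l ** A = - T l" "A ** A = - mat 1"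
  shows "tform T U (A *v V) W = tform T U V (A *v W)"
proof -
  have "A *v (A *v (- W)) = W"
    using assms(2) by (simp add: matrix_vector_mul_assoc matrix_vector_mult_uminus_left)
  then have "tform T U (A *v V) W = tform T U (A *v V) (A *v (A *v (- W)))"
    by simp
  also have "\<dots> = tform T U V (A *v W)"
    by (simp add: tform_anti_invariant[OF assms(1)] matrix_vector_mult_uminus_right tform_uminus3)
  finally show ?thesis .
qed

text \<open>The Nijenhuis tensor of \<open>A\<close> in terms of a tensor \<open>T\<close> in the role of \<open>\<nabla>\<omega>\<close>, as a
  trilinear form and in components.\<close>

definition nij_form :: "('n \<Rightarrow> real^'n^'n) \<Rightarrow> real^'n^'n \<Rightarrow> real^'n \<Rightarrow> real^'n \<Rightarrow> real^'n \<Rightarrow> real" where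
  "nij_form T A W Y Z = tform T (A *v Y) W Z - tform T (A *v Z) W Y
     + tform T Y (A *v W) Z - tform T Z (A *v W) Y"

definition nij_index :: "('n \<Rightarrow> real^'n^'n) \<Rightarrow> real^'n^'n \<Rightarrow> 'n \<Rightarrow> 'n \<Rightarrow> 'n \<Rightarrow> real" where
  "nij_index T A s i j = (\<Sum>m\<in>UNIV. A$m$i * T m $ s $ j) - (\<Sum>m\<in>UNIV. A$m$j * T m $ s $ i)
     + (transpose A ** T i) $ s $ j - (transpose A ** T j) $ s $ i"

lemma tform_axis23: "tform T X (axis s 1) (axis j 1) = (\<Sum>m\<in>UNIV. X$m * T m $ s $ j)"
  by (simp add: tform_def inner_axis_left matrix_vector_mult_axis_nth tmat_nth)

lemma tform_matrix_axis:
  "tform T X (A *v axis s 1) (axis j 1) = (transpose A ** tmat T X) $ s $ j"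
proof -
  have "tform T X (A *v axis s 1) (axis j 1) = axis s 1 \<bullet> (transpose A *v (tmat T X *v axis j 1))"
    unfolding tform_def by (rule inner_matrix_vector_mult_left)
  then show ?thesis
    by (simp add: inner_axis_left matrix_vector_mult_axis_nth matrix_vector_mul_assoc)
qed

lemma nij_form_axis: "nij_form T A (axis s 1) (axis i 1) (axis j 1) = nij_index T A s i j"
  unfolding nij_form_def nij_index_def tform_axis23 tform_matrix_axis tmat_axis
  by (simp add: matrix_vector_mult_axis_nth)

lemma tform_expand2: "tform T X W Z = (\<Sum>s\<in>UNIV. W$s * tform T X (axis s 1) Z)"
  by (simp add: tform_def inner_axis_left) (simp add: inner_vec_def)

lemma tform_expand2_matrix: "tform T X (A *v W) Z = (\<Sum>s\<in>UNIV. W$s * tform T X (A *v axis s 1) Z)"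
  by (simp add: tform_def inner_matrix_vector_mult_left inner_axis_left) (simp add: inner_vec_def)

lemma nij_form_expand1: "nij_form T A W Y Z = (\<Sum>s\<in>UNIV. W$s * nij_form T A (axis s 1) Y Z)"
  unfolding nij_form_def
  by (subst (1 2) tform_expand2, subst (1 2) tform_expand2_matrix)
     (simp add: sum_subtractf[symmetric] sum.distrib[symmetric] algebra_simps)

lemma nij_form_axis23:
  assumes "\<forall>s i j. nij_index T A s i j = 0"
  shows "nij_form T A W (axis i 1) (axis j 1) = 0"
  using assms by (subst nij_form_expand1) (simp add: nij_form_axis)

lemma nij_form_rotate:
  assumes skew: "\<forall>l. transpose (T l) = - T l"
    and anti: "\<forall>l. transpose A ** T l ** A = - T l" and sq: "A ** A = - mat 1"
  shows "nij_form T A (A *v X) Y Z = - tform T (A *v Y) (A *v Z) X - tform T (A *v Z) X (A *v Y)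
      + tform T Y Z X + tform T Z X Y"
proof -
  have AA: "A *v (A *v v) = - v" for v
    using sq by (simp add: matrix_vector_mul_assoc matrix_vector_mult_uminus_left)
  note swap = tform_swap_anti_invariant[OF anti sq] and sk = tform_skew[OF skew]
  have "tform T (A *v Y) (A *v X) Z = - tform T (A *v Y) (A *v Z) X"
    using swap[of "A *v Y" X Z] sk[of "A *v Y" X "A *v Z"] by simp
  moreover have "tform T (A *v Z) (A *v X) Y = tform T (A *v Z) X (A *v Y)"
    using swap[of "A *v Z" X Y] by simp
  moreover have "tform T Y (A *v (A *v X)) Z = tform T Y Z X"
    using sk[of Y X Z] by (simp add: AA tform_uminus2)
  moreover have "tform T Z (A *v (A *v X)) Y = - tform T Z X Y"
    by (simp add: AA tform_uminus2)
  ultimately show ?thesis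
    unfolding nij_form_def by simp
qed

text \<open>The classical formula \<open>2 g((\<nabla>\<^sub>X A)Y, Z) = d\<omega>(X,Y,Z) - d\<omega>(X,AY,AZ)\<close> for an
  integrable Hermitian structure, with \<open>T\<close> in the role of \<open>\<nabla>\<omega>\<close> and \<open>D\<close> of \<open>d\<omega>\<close>.\<close>

lemma tensor_from_cyclic_sum:
  assumes skew: "\<forall>l. transpose (T l) = - T l"
    and anti: "\<forall>l. transpose A ** T l ** A = - T l" and sq: "A ** A = - mat 1"
    and cyclic: "\<forall>l j k. D l j k = T l $ j $ k + T j $ k $ l + T k $ l $ j"
    and nij: "\<forall>s i j. nij_index T A s i j = 0"
  shows "2 * T l $ j $ k = D l j k - (\<Sum>b\<in>UNIV. \<Sum>c\<in>UNIV. D l b c * A$b$j * A$c$k)"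
proof -
  define X Y Z where "X = axis l (1::real)" and "Y = axis j (1::real)" and "Z = axis k (1::real)"
  have "tform3 D X Y Z = D l j k"
    unfolding X_def Y_def Z_def by (simp only: tform3_axis1 sum_mult_axis)
  moreover have "tform3 D X (A *v Y) (A *v Z) = (\<Sum>b\<in>UNIV. \<Sum>c\<in>UNIV. D l b c * A$b$j * A$c$k)"
    by (simp add: X_def Y_def Z_def tform3_axis1 matrix_vector_mult_axis_nth)
  moreover have "nij_form T A (A *v X) Y Z = 0"
    unfolding X_def Y_def Z_def by (rule nij_form_axis23[OF nij])
  moreover have "tform T X Y Z = T l $ j $ k"
    by (simp add: X_def Y_def Z_def tform_axis)
  ultimately show ?thesis
    using tform3_cyclic[OF cyclic, of X Y Z] tform3_cyclic[OF cyclic, of X "A *v Y" "A *v Z"]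
      nij_form_rotate[OF skew anti sq, of X Y Z] tform_anti_invariant[OF anti, of X Y Z]
    by linarith
qed

section \<open>The covariant derivative of the fundamental form at a point\<close>

text \<open>A point of the chart is described by 1-jets: \<open>G\<close>, \<open>A\<close> are the values of the metric and
  of the complex structure there and \<open>Gd l\<close>, \<open>Ad l\<close> their \<open>l\<close>-th partial derivatives.\<close>

definition nijenhuis_at :: "real^'n^'n \<Rightarrow> ('n \<Rightarrow> real^'n^'n) \<Rightarrow> 'n \<Rightarrow> 'n \<Rightarrow> 'n \<Rightarrow> real" where
  "nijenhuis_at A Ad i j k = (\<Sum>l\<in>UNIV. A $ l $ i * Ad l $ k $ j - A $ l $ j * Ad l $ k $ i
     - A $ k $ l * (Ad i $ l $ j - Ad j $ l $ i))"

definition hermitian_jet ::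
    "real^'n^'n \<Rightarrow> ('n \<Rightarrow> real^'n^'n) \<Rightarrow> real^'n^'n \<Rightarrow> ('n \<Rightarrow> real^'n^'n) \<Rightarrow> bool" where
  "hermitian_jet G Gd A Ad \<longleftrightarrow> metric_matrix G \<and> hermitian_cs G A \<and>
     (\<forall>l i j. Gd l $ i $ j = Gd l $ j $ i) \<and>
     (\<forall>l. Ad l ** A + A ** Ad l = 0) \<and>
     (\<forall>l. Gd l ** A + G ** Ad l + transpose A ** Gd l + transpose (Ad l) ** G = 0) \<and>
     (\<forall>i j k. nijenhuis_at A Ad i j k = 0)"

definition d_omega ::
    "real^'n^'n \<Rightarrow> ('n \<Rightarrow> real^'n^'n) \<Rightarrow> real^'n^'n \<Rightarrow> ('n \<Rightarrow> real^'n^'n) \<Rightarrow> 'n \<Rightarrow> 'n \<Rightarrow> 'n \<Rightarrow> real"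
  where "d_omega G Gd A Ad l j k = (Gd l ** A + G ** Ad l) $ j $ k
     + (Gd j ** A + G ** Ad j) $ k $ l + (Gd k ** A + G ** Ad k) $ l $ j"

text \<open>Christoffel symbols of the first kind, \<open>christoffel Gd l $ k $ j = \<Gamma>\<^sub>l\<^sub>j\<^sub>,\<^sub>k\<close>, and the
  components \<open>(\<nabla>\<^sub>l \<omega>)\<^sub>j\<^sub>k\<close> of the covariant derivative of \<open>\<omega> = G A\<close>.\<close>

definition christoffel :: "('n \<Rightarrow> real^'n^'n) \<Rightarrow> 'n \<Rightarrow> real^'n^'n" where
  "christoffel Gd l = (\<chi> k j. (Gd l $ j $ k + Gd j $ l $ k - Gd k $ l $ j) / 2)"

definition nabla_omega ::
    "real^'n^'n \<Rightarrow> ('n \<Rightarrow> real^'n^'n) \<Rightarrow> real^'n^'n \<Rightarrow> ('n \<Rightarrow> real^'n^'n) \<Rightarrow> 'n \<Rightarrow> real^'n^'n"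
  where "nabla_omega G Gd A Ad l = G ** Ad l + christoffel Gd l ** A + transpose A ** christoffel Gd l"

lemma christoffel_add_transpose:
  assumes "\<forall>l i j. Gd l $ i $ j = Gd l $ j $ i"
  shows "christoffel Gd l + transpose (christoffel Gd l) = Gd l"
  using assms by (simp add: christoffel_def vec_eq_iff transpose_def field_simps)

lemma christoffel_swap:
  assumes "\<forall>l i j. Gd l $ i $ j = Gd l $ j $ i"
  shows "christoffel Gd l $ k $ j = christoffel Gd j $ k $ l"
  using assms by (simp add: christoffel_def)

lemma nabla_omega_skew:
  assumes "hermitian_jet G Gd A Ad"
  shows "transpose (nabla_omega G Gd A Ad l) = - nabla_omega G Gd A Ad l"
proof -
  let ?L = "christoffel Gd l"
  have sym: "transpose G = G" "\<forall>l i j. Gd l $ i $ j = Gd l $ j $ i"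
    and om: "Gd l ** A + G ** Ad l + transpose A ** Gd l + transpose (Ad l) ** G = 0"
    using assms by (auto simp: hermitian_jet_def metric_matrix_def)
  have "nabla_omega G Gd A Ad l + transpose (nabla_omega G Gd A Ad l)
      = G ** Ad l + transpose (Ad l) ** G + (?L + transpose ?L) ** A + transpose A ** (?L + transpose ?L)"
    using sym by (simp add: nabla_omega_def matrix_ring_simps algebra_simps)
  also have "\<dots> = 0"
    using om christoffel_add_transpose[OF sym(2), of l] by (simp add: algebra_simps)
  finally show ?thesis by (simp add: eq_neg_iff_add_eq_0 add.commute)
qed

lemma nabla_omega_anti_invariant:
  assumes "hermitian_jet G Gd A Ad"
  shows "transpose A ** nabla_omega G Gd A Ad l ** A = - nabla_omega G Gd A Ad l"
proof -
  let ?L = "christoffel Gd l"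
  have sq: "A ** A = - mat 1" and herm: "transpose A ** G ** A = G"
    and ad: "Ad l ** A = - (A ** Ad l)"
    using assms by (auto simp: hermitian_jet_def hermitian_cs_def eq_neg_iff_add_eq_0)
  have sqt: "transpose A ** transpose A = - mat 1"
    using sq by (metis matrix_transpose_mul transpose_uminus transpose_mat)
  have "transpose A ** G ** Ad l ** A = - (transpose A ** G ** A ** Ad l)"
    using ad by (simp flip: matrix_mul_assoc add: matrix_mul_uminus_right)
  then have "transpose A ** G ** Ad l ** A = - (G ** Ad l)"
    using herm by simp
  moreover have "transpose A ** ?L ** A ** A = - (transpose A ** ?L)"
    using matrix_mul_neg_cancel[OF sq] .
  moreover have "transpose A ** (transpose A ** ?L) ** A = - (?L ** A)"
    using sqt by (simp add: matrix_mul_assoc matrix_mul_uminus_left)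
  ultimately show ?thesis
    unfolding nabla_omega_def matrix_add_ldistrib matrix_add_rdistrib
    by (simp add: matrix_mul_assoc)
qed

lemma christoffel_cyclic:
  fixes Gd :: "4 \<Rightarrow> real^4^4"
  assumes "\<forall>l i j. Gd l $ i $ j = Gd l $ j $ i"
  shows "(christoffel Gd l ** A + transpose A ** christoffel Gd l - Gd l ** A) $ j $ k
       + (christoffel Gd j ** A + transpose A ** christoffel Gd j - Gd j ** A) $ k $ l
       + (christoffel Gd k ** A + transpose A ** christoffel Gd k - Gd k ** A) $ l $ j = 0"
proof -
  have sym: "Gd a $ b $ c = Gd a $ c $ b" for a b c using assms by blast
  show ?thesis
    by (simp add: christoffel_def matrix_matrix_mult_def transpose_def sum_4 sym field_simps)
qed

text \<open>Torsion-freeness: \<open>d\<omega>\<close> is the alternation of \<open>\<nabla>\<omega>\<close>.\<close>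

lemma d_omega_eq_cyclic_nabla_omega:
  fixes G A :: "real^4^4"
  assumes "\<forall>l i j. Gd l $ i $ j = Gd l $ j $ i"
  shows "d_omega G Gd A Ad l j k = nabla_omega G Gd A Ad l $ j $ k
     + nabla_omega G Gd A Ad j $ k $ l + nabla_omega G Gd A Ad k $ l $ j"
  using christoffel_cyclic[OF assms, of l A j k]
  by (simp add: d_omega_def nabla_omega_def algebra_simps)

lemma nijenhuis_at_contract:
  fixes G A :: "real^4^4"
  shows "(\<Sum>m\<in>UNIV. A$m$i * (G ** Ad m)$s$j) - (\<Sum>m\<in>UNIV. A$m$j * (G ** Ad m)$s$i)
    - (G ** A ** Ad i)$s$j + (G ** A ** Ad j)$s$i = (\<Sum>k\<in>UNIV. G$s$k * nijenhuis_at A Ad i j k)"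
  by (simp add: nijenhuis_at_def matrix_matrix_mult_def sum_4 algebra_simps)

lemma christoffel_nij_index_cancel:
  fixes A :: "real^4^4"
  assumes "\<forall>l k j. L l $ k $ j = L j $ k $ l"
  shows "(\<Sum>m\<in>UNIV. A$m$i * ((L m ** A)$s$j + (transpose A ** L m)$s$j))
     - (\<Sum>m\<in>UNIV. A$m$j * ((L m ** A)$s$i + (transpose A ** L m)$s$i))
     + (transpose A ** L i ** A)$s$j - L i $s$j - (transpose A ** L j ** A)$s$i + L j $s$i = 0"
proof -
  have swap: "L l $ k $ j = L j $ k $ l" for l k j using assms by blast
  show ?thesis
    by (simp add: matrix_matrix_mult_def transpose_def sum_4 algebra_simps swap)
qed

lemma nij_index_nabla_omega:
  fixes G A :: "real^4^4"
  assumes "hermitian_jet G Gd A Ad"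
  shows "nij_index (nabla_omega G Gd A Ad) A s i j = 0"
proof -
  let ?L = "christoffel Gd"
  have herm: "hermitian_cs G A" and sym: "\<forall>l i j. Gd l $ i $ j = Gd l $ j $ i"
    and nij: "\<forall>i j k. nijenhuis_at A Ad i j k = 0"
    using assms by (auto simp: hermitian_jet_def)
  have sqt: "transpose A ** transpose A = - mat 1"
    using herm by (metis hermitian_cs_def matrix_transpose_mul transpose_uminus transpose_mat)
  have "transpose A ** nabla_omega G Gd A Ad m
      = transpose A ** G ** Ad m + transpose A ** ?L m ** A + transpose A ** transpose A ** ?L m" for m
    by (simp add: nabla_omega_def matrix_add_ldistrib matrix_mul_assoc)
  then have At_nabla: "transpose A ** nabla_omega G Gd A Ad m
      = - (G ** A ** Ad m) + transpose A ** ?L m ** A - ?L m" for m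
    using sqt hermitian_cs_transpose_mult[OF herm] by (simp add: matrix_mul_uminus_left)
  have "nij_index (nabla_omega G Gd A Ad) A s i j =
     ((\<Sum>m\<in>UNIV. A$m$i * (G ** Ad m)$s$j) - (\<Sum>m\<in>UNIV. A$m$j * (G ** Ad m)$s$i)
    - (G ** A ** Ad i)$s$j + (G ** A ** Ad j)$s$i)
    + ((\<Sum>m\<in>UNIV. A$m$i * ((?L m ** A)$s$j + (transpose A ** ?L m)$s$j))
     - (\<Sum>m\<in>UNIV. A$m$j * ((?L m ** A)$s$i + (transpose A ** ?L m)$s$i))
     + (transpose A ** ?L i ** A)$s$j - ?L i $s$j - (transpose A ** ?L j ** A)$s$i + ?L j $s$i)"
    unfolding nij_index_def At_nabla by (simp add: nabla_omega_def algebra_simps sum.distrib)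
  also have "\<dots> = 0"
  proof -
    have swap: "\<forall>l k j. ?L l $ k $ j = ?L j $ k $ l"
      using christoffel_swap[OF sym] by blast
    show ?thesis
      unfolding nijenhuis_at_contract christoffel_nij_index_cancel[OF swap] using nij by simp
  qed
  finally show ?thesis .
qed

lemma nabla_omega_lee_form:
  fixes G A :: "real^4^4"
  assumes jet: "hermitian_jet G Gd A Ad"
    and lee: "\<forall>l j k. d_omega G Gd A Ad l j k = wedge12 th (G ** A) l j k"
  shows "2 *\<^sub>R nabla_omega G Gd A Ad l
     = (\<chi> j k. wedge12 th (G ** A) l j k) - transpose A ** (\<chi> j k. wedge12 th (G ** A) l j k) ** A"
proof -
  let ?T = "nabla_omega G Gd A Ad" and ?D = "wedge12 th (G ** A)"
  have sq: "A ** A = - mat 1" and sym: "\<forall>l i j. Gd l $ i $ j = Gd l $ j $ i"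
    using jet by (auto simp: hermitian_jet_def hermitian_cs_def)
  have skew: "\<forall>l. transpose (?T l) = - ?T l"
    using nabla_omega_skew[OF jet] by blast
  have anti: "\<forall>l. transpose A ** ?T l ** A = - ?T l"
    using nabla_omega_anti_invariant[OF jet] by blast
  have cyclic: "\<forall>l j k. ?D l j k = ?T l $ j $ k + ?T j $ k $ l + ?T k $ l $ j"
    using d_omega_eq_cyclic_nabla_omega[OF sym] lee by simp
  have nij: "\<forall>s i j. nij_index ?T A s i j = 0"
    using nij_index_nabla_omega[OF jet] by blast
  show ?thesis
    using tensor_from_cyclic_sum[OF skew anti sq cyclic nij]
    by (simp add: vec_eq_iff transpose_mult_mult_entry)
qed

lemma hermitian_cs_conj_inverse:
  assumes "metric_matrix G" "hermitian_cs G A"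
  shows "G ** A ** matrix_inv G = - transpose A"
proof -
  have "transpose A ** G ** matrix_inv G = - (G ** A) ** matrix_inv G"
    using hermitian_cs_transpose_mult[OF assms(2)] by simp
  then show ?thesis
    using metric_matrix_inverse(2)[OF assms(1)]
    by (simp flip: matrix_mul_assoc add: matrix_mul_uminus_left)
qed

lemma inverse_transpose_hermitian_cs:
  assumes "metric_matrix G" "hermitian_cs G A"
  shows "matrix_inv G ** transpose A = - (A ** matrix_inv G)"
proof -
  have "matrix_inv G ** (G ** A ** matrix_inv G) = A ** matrix_inv G"
    using metric_matrix_inverse(1)[OF assms(1)] by (simp add: matrix_mul_assoc)
  then have "- (matrix_inv G ** transpose A) = A ** matrix_inv G"
    using hermitian_cs_conj_inverse[OF assms] by (simp add: matrix_mul_uminus_right)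
  then show ?thesis
    by (metis minus_minus)
qed

lemma commutator_identities:
  fixes G A B :: "real^'n^'n"
  assumes metric: "metric_matrix G" and hA: "hermitian_cs G A" and hB: "hermitian_cs G B"
  defines "Ginv \<equiv> matrix_inv G"
  shows "transpose (G ** A) ** (B + A ** B ** A) ** Ginv = transpose (A ** B - B ** A)"
    and "G ** A ** transpose Ginv ** transpose (B + A ** B ** A) = transpose (A ** B - B ** A)"
    and "trace (Ginv ** (G ** A) ** (B + A ** B ** A)) = 0"
proof -
  have gs: "transpose G = G" using metric by (simp add: metric_matrix_def)
  have gl: "Ginv ** G = mat 1" and gis: "transpose Ginv = Ginv"
    using metric_matrix_inverse[OF metric] by (simp_all add: Ginv_def)
  have sqA: "A ** A = - mat 1" using hA by (simp add: hermitian_cs_def)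
  have cancel: "X ** Ginv ** G = X" for X :: "real^'n^'n"
    using gl by (simp flip: matrix_mul_assoc)
  have gag: "X ** G ** A ** Ginv = - (X ** transpose A)" for X :: "real^'n^'n"
    using hermitian_cs_conj_inverse[OF metric hA]
    by (simp add: Ginv_def matrix_mul_uminus_right flip: matrix_mul_assoc)
  have gbg: "X ** G ** B ** Ginv = - (X ** transpose B)" for X :: "real^'n^'n"
    using hermitian_cs_conj_inverse[OF metric hB]
    by (simp add: Ginv_def matrix_mul_uminus_right flip: matrix_mul_assoc)
  have sqAt: "transpose A ** transpose A = - mat 1"
    by (metis matrix_transpose_mul sqA transpose_mat transpose_uminus)
  have tGA: "transpose (G ** A) = - (G ** A)"
    using hermitian_cs_transpose_mult[OF hA] gs by (simp add: matrix_transpose_mul)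
  have "G ** A ** B ** Ginv = G ** A ** Ginv ** G ** B ** Ginv"
    by (simp add: cancel)
  then have e1: "G ** A ** B ** Ginv = transpose A ** transpose B"
    using gag[of "mat 1"] gbg[of "G ** A ** Ginv"] by (simp add: matrix_mul_uminus_left)
  have "G ** A ** (A ** B ** A) ** Ginv = - (G ** B ** Ginv ** G ** A ** Ginv)"
    by (simp add: matrix_mul_assoc matrix_mul_neg_cancel[OF sqA] cancel matrix_mul_uminus_left)
  then have e2: "G ** A ** (A ** B ** A) ** Ginv = - (transpose B ** transpose A)"
    using gbg[of "mat 1"] gag[of "G ** B ** Ginv"] by (simp add: matrix_mul_uminus_left)
  show "transpose (G ** A) ** (B + A ** B ** A) ** Ginv = transpose (A ** B - B ** A)"
    unfolding tGA
    by (simp add: matrix_ring_simps e1[unfolded matrix_mul_assoc] e2[unfolded matrix_mul_assoc]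
        matrix_mul_assoc)
  show "G ** A ** transpose Ginv ** transpose (B + A ** B ** A) = transpose (A ** B - B ** A)"
    unfolding gis using gag[of "mat 1"]
    by (simp add: matrix_ring_simps matrix_mul_assoc sqAt matrix_mul_neg_cancel[OF sqAt]
        matrix_mul_neg_cancel[OF sqA])
  have "trace (Ginv ** (G ** A) ** (B + A ** B ** A)) = trace (A ** B) + trace (A ** A ** (B ** A))"
    using gl by (simp add: matrix_mul_assoc matrix_add_ldistrib trace_add)
  also have "\<dots> = 0"
    using sqA by (simp add: matrix_mul_uminus_left trace_uminus trace_mul_sym[of A B])
  finally show "trace (Ginv ** (G ** A) ** (B + A ** B ** A)) = 0" .
qed

lemma trace_wedge12:
  fixes X om M :: "real^4^4"
  shows "trace (X ** (\<chi> j k. wedge12 th om l j k) ** M) = th$l * trace (X ** om ** M)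
     + ((transpose om ** M ** X) *v th)$l + ((om ** transpose X ** transpose M) *v th)$l"
  by (simp add: trace_def matrix_matrix_mult_def matrix_vector_mult_def transpose_def wedge12_def
      sum_4 algebra_simps)

lemma trace_nabla_omega_lee_form:
  fixes G A B :: "real^4^4"
  assumes jet: "hermitian_jet G Gd A Ad" and hB: "hermitian_cs G B"
    and lee: "\<forall>l j k. d_omega G Gd A Ad l j k = wedge12 th (G ** A) l j k"
  shows "trace (matrix_inv G ** nabla_omega G Gd A Ad l ** B) = (transpose (A ** B - B ** A) *v th) $ l"
proof -
  define Ginv W where "Ginv = matrix_inv G" and "W = (\<chi> j k. wedge12 th (G ** A) l j k)"
  have metric: "metric_matrix G" and hA: "hermitian_cs G A"
    using jet by (auto simp: hermitian_jet_def)
  note ids = commutator_identities[OF metric hA hB, folded Ginv_def]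
  have "2 * trace (Ginv ** nabla_omega G Gd A Ad l ** B)
      = trace (Ginv ** (2 *\<^sub>R nabla_omega G Gd A Ad l) ** B)"
    by (simp add: matrix_mul_scaleR_right matrix_mul_scaleR_left trace_scaleR)
  also have "\<dots> = trace (Ginv ** W ** B) - trace (Ginv ** transpose A ** W ** A ** B)"
    unfolding nabla_omega_lee_form[OF jet lee, of l, folded W_def]
    by (simp add: matrix_diff_ldistrib matrix_diff_rdistrib trace_sub matrix_mul_assoc)
  also have "trace (Ginv ** transpose A ** W ** A ** B) = - trace (A ** (Ginv ** W ** A ** B))"
    using inverse_transpose_hermitian_cs[OF metric hA]
    by (simp add: Ginv_def matrix_mul_uminus_left trace_uminus matrix_mul_assoc)
  also have "trace (A ** (Ginv ** W ** A ** B)) = trace (Ginv ** W ** (A ** B ** A))"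
    using trace_mul_sym[of A "Ginv ** W ** A ** B"] by (simp add: matrix_mul_assoc)
  also have "trace (Ginv ** W ** B) - - trace (Ginv ** W ** (A ** B ** A))
      = trace (Ginv ** W ** (B + A ** B ** A))"
    by (simp add: matrix_add_ldistrib trace_add)
  also have "\<dots> = 2 * (transpose (A ** B - B ** A) *v th) $ l"
    unfolding W_def trace_wedge12 ids by simp
  finally show ?thesis
    by (simp add: Ginv_def)
qed

text \<open>The Christoffel term is antisymmetric in \<open>A\<close> and \<open>B\<close>, so it cancels in the derivative of
  the angle function.\<close>

lemma trace_derivative_lee_form:
  fixes G A B :: "real^4^4"
  assumes jet: "hermitian_jet G Gd A Ad" and hB: "hermitian_cs G B"
    and lee: "\<forall>l j k. d_omega G Gd A Ad l j k = wedge12 th (G ** A) l j k"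
  shows "trace (Ad l ** B) = (transpose (A ** B - B ** A) *v th) $ l
     - trace (matrix_inv G ** christoffel Gd l ** (A ** B - B ** A))"
proof -
  define Ginv C where "Ginv = matrix_inv G" and "C = matrix_inv G ** christoffel Gd l"
  have metric: "metric_matrix G" and hA: "hermitian_cs G A"
    using jet by (auto simp: hermitian_jet_def)
  have "Ginv ** nabla_omega G Gd A Ad l
      = Ginv ** G ** Ad l + C ** A + Ginv ** transpose A ** christoffel Gd l"
    by (simp add: Ginv_def C_def nabla_omega_def matrix_add_ldistrib matrix_mul_assoc)
  then have "Ad l = Ginv ** nabla_omega G Gd A Ad l - C ** A + A ** C"
    using metric_matrix_inverse(1)[OF metric] inverse_transpose_hermitian_cs[OF metric hA]
    by (simp add: Ginv_def C_def matrix_mul_uminus_left matrix_mul_assoc)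
  then have "trace (Ad l ** B) = trace (Ginv ** nabla_omega G Gd A Ad l ** B)
      - trace (C ** A ** B) + trace (A ** C ** B)"
    by (simp add: matrix_add_rdistrib matrix_diff_rdistrib trace_add trace_sub)
  also have "trace (A ** C ** B) = trace (C ** B ** A)"
    using trace_mul_sym[of A "C ** B"] by (simp add: matrix_mul_assoc)
  finally show ?thesis
    using trace_nabla_omega_lee_form[OF jet hB lee]
    by (simp add: Ginv_def C_def matrix_diff_ldistrib trace_sub matrix_mul_assoc)
qed

section \<open>The commutator of two Hermitian complex structures\<close>

lemma inner_skew_matrix_self:
  fixes S :: "real^'n^'n"
  assumes "transpose S = - S"
  shows "v \<bullet> (S *v v) = 0"
proof -
  have "v \<bullet> (S *v v) = (transpose S *v v) \<bullet> v"
    by (simp add: dot_lmul_matrix)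
  also have "\<dots> = - ((S *v v) \<bullet> v)"
    using assms by (simp add: matrix_vector_mult_uminus_left)
  finally show ?thesis
    by (simp add: inner_commute)
qed

lemma commutator_square:
  fixes A B :: "real^'n^'n"
  assumes sqA: "A ** A = - mat 1" and sqB: "B ** B = - mat 1"
    and anti: "A ** B + B ** A = c *\<^sub>R mat 1"
  shows "(A ** B - B ** A) ** (A ** B - B ** A) = (c\<^sup>2 - 4) *\<^sub>R mat 1"
proof -
  note cancel = matrix_mul_neg_cancel[OF sqA] matrix_mul_neg_cancel[OF sqB]
  have square: "(A ** B - B ** A) ** (A ** B - B ** A) = A ** B ** A ** B + B ** A ** B ** A - 2 *\<^sub>R mat 1"
    by (simp add: matrix_ring_simps matrix_mul_assoc cancel sqA sqB scaleR_2 algebra_simps)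
  have "(A ** B + B ** A) ** (A ** B + B ** A)
      = A ** B ** A ** B + B ** A ** B ** A + 2 *\<^sub>R mat 1"
    by (simp add: matrix_ring_simps matrix_mul_assoc cancel sqA sqB scaleR_2 algebra_simps)
  moreover have "(A ** B + B ** A) ** (A ** B + B ** A) = c\<^sup>2 *\<^sub>R mat 1"
    unfolding anti by (simp add: matrix_mul_scaleR_left matrix_mul_scaleR_right power2_eq_square)
  ultimately have "A ** B ** A ** B + B ** A ** B ** A = c\<^sup>2 *\<^sub>R mat 1 - 2 *\<^sub>R mat 1"
    by (simp add: algebra_simps)
  moreover have "(c\<^sup>2 - 4) *\<^sub>R (mat 1 :: real^'n^'n) = c\<^sup>2 *\<^sub>R mat 1 - 2 *\<^sub>R mat 1 - 2 *\<^sub>R mat 1"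
    by (simp flip: scaleR_diff_left)
  ultimately show ?thesis
    using square by simp
qed

lemma commutator_inverse_skew:
  fixes G A B :: "real^'n^'n"
  assumes metric: "metric_matrix G" and hA: "hermitian_cs G A" and hB: "hermitian_cs G B"
  shows "matrix_inv G ** transpose (A ** B - B ** A) = - ((A ** B - B ** A) ** matrix_inv G)"
proof -
  have "X ** matrix_inv G ** transpose A = - (X ** A ** matrix_inv G)"
    and "X ** matrix_inv G ** transpose B = - (X ** B ** matrix_inv G)" for X :: "real^'n^'n"
    using inverse_transpose_hermitian_cs[OF metric hA] inverse_transpose_hermitian_cs[OF metric hB]
    by (simp_all add: matrix_mul_uminus_right flip: matrix_mul_assoc)
  then show ?thesis
    using inverse_transpose_hermitian_cs[OF metric hA] inverse_transpose_hermitian_cs[OF metric hB]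
    by (simp add: matrix_ring_simps matrix_mul_assoc)
qed

lemma commutator_norm_identities:
  fixes G A B :: "real^4^4" and th :: "real^4"
  assumes metric: "metric_matrix G" and hA: "hermitian_cs G A" and hB: "hermitian_cs G B"
    and anti: "A ** B + B ** A = c *\<^sub>R mat 1" and nondeg: "det (A ** B - B ** A) \<noteq> 0"
  defines "v \<equiv> (1/2) *\<^sub>R (transpose (A ** B - B ** A) *v th)"
  shows "inner_g G v th = 0" and "inner_g G th th = inner_g G v v / (1 - c\<^sup>2 / 4)"
proof -
  define K Ginv where "K = A ** B - B ** A" and "Ginv = matrix_inv G"
  have KG: "Ginv ** transpose K = - (K ** Ginv)"
    using commutator_inverse_skew[OF assms(1-3)] by (simp add: K_def Ginv_def)
  have "A ** A = - mat 1" "B ** B = - mat 1"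
    using hA hB by (simp_all add: hermitian_cs_def)
  then have KK: "K ** K = (c\<^sup>2 - 4) *\<^sub>R mat 1"
    unfolding K_def using anti by (rule commutator_square)
  have "transpose (K ** Ginv) = - (K ** Ginv)"
    using KG metric_matrix_inverse(3)[OF metric] by (simp add: Ginv_def matrix_transpose_mul)
  then show "inner_g G v th = 0"
    using inner_skew_matrix_self[of "K ** Ginv" th]
    by (simp add: v_def inner_g_def dot_lmul_matrix matrix_vector_mul_assoc flip: K_def Ginv_def)
  have "K ** Ginv ** transpose K = - (K ** K ** Ginv)"
    using KG by (simp add: matrix_mul_uminus_right flip: matrix_mul_assoc)
  then have KGK: "K ** Ginv ** transpose K = (4 - c\<^sup>2) *\<^sub>R Ginv"
    using KK by (simp add: matrix_mul_scaleR_left flip: scaleR_minus_left)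
  have "(K ** Ginv) *v (th v* K) = (K ** Ginv ** transpose K) *v th"
    by (metis matrix_vector_mul_assoc transpose_matrix_vector)
  then have "inner_g G v v = (1/4) * (th \<bullet> ((K ** Ginv ** transpose K) *v th))"
    by (simp add: v_def inner_g_def dot_lmul_matrix matrix_vector_mult_scaleR matrix_vector_mul_assoc
        flip: K_def Ginv_def)
  also have "\<dots> = (1 - c\<^sup>2 / 4) * inner_g G th th"
    unfolding KGK by (simp add: inner_g_def Ginv_def algebra_simps flip: scaleR_matrix_vector_assoc)
  finally have "inner_g G v v = (1 - c\<^sup>2 / 4) * inner_g G th th" .
  moreover have "1 - c\<^sup>2 / 4 \<noteq> 0"
  proof
    assume "1 - c\<^sup>2 / 4 = 0"
    then have "K ** K = 0" using KK by simp
    then have "det K * det K = 0" by (metis det_mul det_0 mat_0)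
    then show False using nondeg by (simp add: K_def)
  qed
  ultimately show "inner_g G th th = inner_g G v v / (1 - c\<^sup>2 / 4)"
    by simp
qed

lemma pd_eq_has_derivative: "(f has_derivative f') (at x) \<Longrightarrow> pd f l x = f' (axis l 1)"
  unfolding pd_def using frechet_derivative_at by metis

lemma pd_add:
  assumes "f differentiable (at x)" "h differentiable (at x)"
  shows "pd (\<lambda>y. f y + h y) l x = pd f l x + pd h l x"
  using pd_eq_has_derivative[OF has_derivative_add[OF assms[THEN frechet_derivative_works[THEN iffD1]]]]
  by (simp add: pd_def)

lemma pd_mult:
  assumes "f differentiable (at x)" "h differentiable (at x)"
  shows "pd (\<lambda>y. f y * h y) l x = pd f l x * h x + f x * pd h l x"
  using pd_eq_has_derivative[OF has_derivative_mult[OF assms[THEN frechet_derivative_works[THEN iffD1]]]]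
  by (simp add: pd_def algebra_simps)

lemma pd_sum:
  assumes "finite S" "\<forall>k\<in>S. f k differentiable (at x)"
  shows "pd (\<lambda>y. \<Sum>k\<in>S. f k y) l x = (\<Sum>k\<in>S. pd (f k) l x)"
proof -
  have "((\<lambda>y. \<Sum>k\<in>S. f k y) has_derivative (\<lambda>v. \<Sum>k\<in>S. frechet_derivative (f k) (at x) v)) (at x)"
    using assms by (intro has_derivative_sum) (auto simp: frechet_derivative_works)
  from pd_eq_has_derivative[OF this] show ?thesis by (simp add: pd_def)
qed

lemma pd_const: "pd (\<lambda>y. c) l x = 0"
  using pd_eq_has_derivative[OF has_derivative_const] by simp

lemma pd_divide_const:
  assumes "f differentiable (at x)"
  shows "pd (\<lambda>y. f y / c) l x = pd f l x / c"
  using pd_mult[OF assms differentiable_const[of "1/c"], of l] pd_const[of "1/c" l x]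
  by (simp add: divide_inverse)

lemma pd_cong_open:
  assumes "open U" "x \<in> U" "\<forall>y\<in>U. f y = h y" "h differentiable (at x)"
  shows "pd f l x = pd h l x"
proof -
  have "(f has_derivative frechet_derivative h (at x)) (at x)"
    using has_derivative_transform_within_open[OF assms(4)[unfolded frechet_derivative_works] assms(1,2)]
      assms(3) by auto
  from pd_eq_has_derivative[OF this] show ?thesis by (simp add: pd_def)
qed

definition mat_pd :: "(pt \<Rightarrow> real^4^4) \<Rightarrow> pt \<Rightarrow> 4 \<Rightarrow> real^4^4" where
  "mat_pd A x l = (\<chi> i j. pd (\<lambda>y. A y $ i $ j) l x)"

definition mat_differentiable :: "(pt \<Rightarrow> real^4^4) \<Rightarrow> pt \<Rightarrow> bool" where
  "mat_differentiable A x \<longleftrightarrow> (\<forall>i j. (\<lambda>y. A y $ i $ j) differentiable (at x))"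

lemma smooth_mat_differentiable: "smooth_mat U A \<Longrightarrow> x \<in> U \<Longrightarrow> mat_differentiable A x"
  unfolding smooth_mat_def smooth_fun_def mat_differentiable_def by (metis pds.simps(1))

lemma mat_differentiable_mult:
  "mat_differentiable A x \<Longrightarrow> mat_differentiable B x \<Longrightarrow> mat_differentiable (\<lambda>y. A y ** B y) x"
  unfolding mat_differentiable_def matrix_matrix_mult_def
  by (auto intro!: differentiable_sum differentiable_mult)

lemma mat_differentiable_transpose:
  "mat_differentiable A x \<Longrightarrow> mat_differentiable (\<lambda>y. transpose (A y)) x"
  by (simp add: mat_differentiable_def transpose_def)

lemma mat_differentiable_const: "mat_differentiable (\<lambda>y. C) x"
  by (simp add: mat_differentiable_def)

lemma mat_pd_mult:
  assumes "mat_differentiable A x" "mat_differentiable B x"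
  shows "mat_pd (\<lambda>y. A y ** B y) x l = mat_pd A x l ** B x + A x ** mat_pd B x l"
proof -
  have "pd (\<lambda>y. (A y ** B y) $ i $ j) l x = (\<Sum>k\<in>UNIV. pd (\<lambda>y. A y $ i $ k * B y $ k $ j) l x)" for i j
    using assms unfolding mat_differentiable_def matrix_matrix_mult_def
    by (simp add: pd_sum differentiable_mult)
  then show ?thesis
    using assms unfolding mat_differentiable_def
    by (simp add: vec_eq_iff mat_pd_def matrix_matrix_mult_def pd_mult sum.distrib)
qed

lemma mat_pd_transpose: "mat_pd (\<lambda>y. transpose (A y)) x l = transpose (mat_pd A x l)"
  by (simp add: mat_pd_def transpose_def)

lemma mat_pd_add:
  "mat_differentiable A x \<Longrightarrow> mat_differentiable B x
    \<Longrightarrow> mat_pd (\<lambda>y. A y + B y) x l = mat_pd A x l + mat_pd B x l"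
  unfolding mat_differentiable_def by (simp add: vec_eq_iff mat_pd_def pd_add)

lemma mat_pd_cong_open:
  assumes "open U" "x \<in> U" "\<forall>y\<in>U. A y = B y" "mat_differentiable B x"
  shows "mat_pd A x l = mat_pd B x l"
  using assms unfolding mat_differentiable_def mat_pd_def vec_eq_iff
  by (auto intro!: pd_cong_open[OF assms(1,2)])

lemma mat_pd_const: "mat_pd (\<lambda>y. C) x l = 0"
  by (simp add: mat_pd_def vec_eq_iff pd_const)

lemma mat_pd_eq_const_open:
  assumes "open U" "x \<in> U" "\<forall>y\<in>U. A y = C"
  shows "mat_pd A x l = 0"
  using mat_pd_cong_open[OF assms mat_differentiable_const] mat_pd_const by simp

section \<open>The 1-jets of a generalized Kaehler structure\<close>

lemma mat_pd_symmetric: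
  assumes "open U" "x \<in> U" "smooth_mat U g" "\<forall>y\<in>U. transpose (g y) = g y"
  shows "mat_pd g x l $ i $ j = mat_pd g x l $ j $ i"
proof -
  have "\<forall>y\<in>U. g y = transpose (g y)"
    using assms(4) by simp
  moreover have "mat_differentiable (\<lambda>y. transpose (g y)) x"
    using mat_differentiable_transpose smooth_mat_differentiable assms(2,3) by blast
  ultimately have "mat_pd g x l = mat_pd (\<lambda>y. transpose (g y)) x l"
    by (rule mat_pd_cong_open[OF assms(1,2)])
  also have "\<dots> = transpose (mat_pd g x l)"
    by (rule mat_pd_transpose)
  finally have "mat_pd g x l $ i $ j = transpose (mat_pd g x l) $ i $ j"
    by (rule arg_cong)
  then show ?thesis
    by (simp add: transpose_def)
qed

lemma mat_pd_square_const:
  assumes U: "open U" "x \<in> U" and diff: "mat_differentiable A x"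
    and "\<forall>y\<in>U. A y ** A y = C"
  shows "mat_pd A x l ** A x + A x ** mat_pd A x l = 0"
  using mat_pd_eq_const_open[OF U assms(4)] by (simp add: mat_pd_mult[OF diff diff])

lemma mat_pd_skew_product:
  assumes U: "open U" "x \<in> U" and mg: "mat_differentiable g x" and ma: "mat_differentiable A x"
    and skew: "\<forall>y\<in>U. g y ** A y + transpose (A y) ** g y = 0"
  shows "mat_pd g x l ** A x + g x ** mat_pd A x l + transpose (A x) ** mat_pd g x l
      + transpose (mat_pd A x l) ** g x = 0"
proof -
  have "mat_pd (\<lambda>y. g y ** A y + transpose (A y) ** g y) x l = 0"
    using skew by (rule mat_pd_eq_const_open[OF U])
  then show ?thesis
    using mat_pd_add[OF mat_differentiable_mult[OF mg ma]
        mat_differentiable_mult[OF mat_differentiable_transpose[OF ma] mg]]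
      mat_pd_mult[OF mg ma] mat_pd_mult[OF mat_differentiable_transpose[OF ma] mg] mat_pd_transpose
    by (simp add: algebra_simps)
qed

lemma hermitian_jet_at:
  assumes U: "open U" "x \<in> U" and rm: "riemannian_metric U g"
    and cs: "complex_structure U A" and herm: "hermitian U g A"
  shows "hermitian_jet (g x) (mat_pd g x) (A x) (mat_pd A x)"
proof -
  have sg: "smooth_mat U g" and sa: "smooth_mat U A"
    and sq: "\<forall>y\<in>U. A y ** A y = - mat 1" and nij: "\<forall>y\<in>U. \<forall>i j k. nijenhuis A y i j k = 0"
    and compat: "\<forall>y\<in>U. transpose (A y) ** g y ** A y = g y"
    using rm cs herm by (auto simp: riemannian_metric_def complex_structure_def hermitian_def)
  have mg: "mat_differentiable g x" and ma: "mat_differentiable A x"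
    using smooth_mat_differentiable U sa sg by auto
  have "\<forall>y\<in>U. g y ** A y + transpose (A y) ** g y = 0"
  proof
    fix y assume "y \<in> U"
    then have "hermitian_cs (g y) (A y)"
      using sq compat by (simp add: hermitian_cs_def)
    then show "g y ** A y + transpose (A y) ** g y = 0"
      by (simp add: hermitian_cs_transpose_mult)
  qed
  note dcompat = mat_pd_skew_product[OF U mg ma this] and dsq = mat_pd_square_const[OF U ma sq]
  have "nijenhuis_at (A x) (mat_pd A x) i j k = nijenhuis A x i j k" for i j k
    by (simp add: nijenhuis_def nijenhuis_at_def mat_pd_def)
  then have "nijenhuis_at (A x) (mat_pd A x) i j k = 0" for i j k
    using nij U by simp
  moreover have "mat_pd g x l $ i $ j = mat_pd g x l $ j $ i" for l i j
    using mat_pd_symmetric[OF U sg] rm by (simp add: riemannian_metric_def)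
  moreover have "metric_matrix (g x)" "A x ** A x = - mat 1" "transpose (A x) ** g x ** A x = g x"
    using rm sq compat U by (auto simp: riemannian_metric_def metric_matrix_def)
  ultimately show ?thesis
    unfolding hermitian_jet_def hermitian_cs_def using dsq dcompat by blast
qed

lemma d2_fund_form_eq_d_omega:
  assumes "mat_differentiable g x" "mat_differentiable A x"
  shows "d2 (fund_form g A) x l j k = d_omega (g x) (mat_pd g x) (A x) (mat_pd A x) l j k"
proof -
  have "pd (\<lambda>y. fund_form g A y $ a $ b) c x = mat_pd (\<lambda>y. g y ** A y) x c $ a $ b" for a b c
    by (simp add: mat_pd_def fund_form_def)
  then have "pd (\<lambda>y. fund_form g A y $ a $ b) c x
      = (mat_pd g x c ** A x + g x ** mat_pd A x c) $ a $ b" for a b c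
    by (simp only: mat_pd_mult[OF assms])
  then show ?thesis
    by (simp only: d2_def d_omega_def)
qed

lemma generalized_kaehler_jets:
  assumes U: "open U" "x \<in> U" and gk: "generalized_kaehler U g I J"
  shows "hermitian_jet (g x) (mat_pd g x) (I x) (mat_pd I x)"
    and "hermitian_jet (g x) (mat_pd g x) (J x) (mat_pd J x)"
proof -
  have "riemannian_metric U g" "complex_structure U I" "complex_structure U J"
    "hermitian U g I" "hermitian U g J"
    using gk by (simp_all add: generalized_kaehler_def)
  then show "hermitian_jet (g x) (mat_pd g x) (I x) (mat_pd I x)"
    and "hermitian_jet (g x) (mat_pd g x) (J x) (mat_pd J x)"
    using hermitian_jet_at[OF U] by blast+
qed

text \<open>The Lee form of \<open>J\<close> is \<open>-\<theta>\<close>: pull \<open>d\<^sup>c\<^sub>I\<omega>\<^sub>I = -d\<^sup>c\<^sub>J\<omega>\<^sub>J\<close> back by \<open>J\<close> and use the pointwise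
  identity \<open>(IJ)\<^sup>*(\<theta> \<and> \<omega>\<^sub>I) = -\<theta> \<and> \<omega>\<^sub>J\<close>.\<close>

lemma lee_form_J:
  assumes U: "open U" "x \<in> U" and gk: "generalized_kaehler U g I J"
    and nondeg: "nondegenerate U I J"
    and lee: "\<forall>x\<in>U. \<forall>i j k. d2 (fund_form g I) x i j k = wedge12 (theta x) (fund_form g I x) i j k"
  shows "d2 (fund_form g J) x = wedge12 (- theta x) (g x ** J x)"
proof -
  obtain H where HI: "\<forall>x\<in>U. \<forall>i j k. dc2 I (fund_form g I) x i j k = H x i j k"
    and HJ: "\<forall>x\<in>U. \<forall>i j k. H x i j k = - dc2 J (fund_form g J) x i j k"
    using gk unfolding generalized_kaehler_def by auto
  note jetI = generalized_kaehler_jets(1)[OF U gk] and jetJ = generalized_kaehler_jets(2)[OF U gk]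
  then have sqJ: "J x ** J x = - mat 1"
    by (simp add: hermitian_jet_def hermitian_cs_def)
  have dcI: "pullback3 (I x) (d2 (fund_form g I) x)
      = (\<lambda>i j k. - pullback3 (J x) (d2 (fund_form g J) x) i j k)"
  proof (intro ext)
    fix i j k
    have "- pullback3 (I x) (d2 (fund_form g I) x) i j k = pullback3 (J x) (d2 (fund_form g J) x) i j k"
      using HI HJ U by (simp add: dc2_eq_pullback3)
    then show "pullback3 (I x) (d2 (fund_form g I) x) i j k
        = - pullback3 (J x) (d2 (fund_form g J) x) i j k"
      by (metis minus_minus)
  qed
  have "d2 (fund_form g J) x = (\<lambda>i j k. - pullback3 (J x) (pullback3 (J x) (d2 (fund_form g J) x)) i j k)"
    by (simp add: pullback3_pullback3 sqJ pullback3_uminus_matrix pullback3_mat1)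
  also have "\<dots> = pullback3 (J x) (pullback3 (I x) (d2 (fund_form g I) x))"
    unfolding dcI pullback3_uminus by simp
  also have "\<dots> = pullback3 (I x ** J x) (wedge12 (theta x) (g x ** I x))"
  proof -
    have "d2 (fund_form g I) x = wedge12 (theta x) (g x ** I x)"
      using lee U by (simp add: fun_eq_iff fund_form_def)
    then show ?thesis by (simp add: pullback3_pullback3)
  qed
  also have "\<dots> = wedge12 (- theta x) (g x ** J x)"
    using jetI jetJ nondeg U
    by (intro pullback3_wedge12_nondegenerate) (auto simp: hermitian_jet_def nondegenerate_def)
  finally show ?thesis .
qed

lemma pd_angle:
  assumes "mat_differentiable I x" "mat_differentiable J x"
  shows "pd (angle I J) l x = trace (mat_pd I x l ** J x + I x ** mat_pd J x l) / 4"
proof -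
  have diff: "\<forall>i j. (\<lambda>y. (I y ** J y) $ i $ j) differentiable (at x)"
    using mat_differentiable_mult[OF assms] unfolding mat_differentiable_def .
  have "angle I J = (\<lambda>y. \<Sum>i\<in>UNIV. (I y ** J y) $ i $ i / 4)"
    by (simp add: fun_eq_iff angle_def trace_def sum_divide_distrib)
  then have "pd (angle I J) l x = (\<Sum>i\<in>UNIV. pd (\<lambda>y. (I y ** J y) $ i $ i / 4) l x)"
    using diff by (simp add: pd_sum differentiable_divide)
  also have "\<dots> = (\<Sum>i\<in>UNIV. mat_pd (\<lambda>y. I y ** J y) x l $ i $ i / 4)"
    using diff by (simp add: pd_divide_const mat_pd_def)
  finally show ?thesis
    by (simp add: mat_pd_mult[OF assms] trace_def sum_divide_distrib)
qed

lemma dfun_angle: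
  assumes U: "open U" "x \<in> U" and gk: "generalized_kaehler U g I J"
    and nondeg: "nondegenerate U I J"
    and lee: "\<forall>x\<in>U. \<forall>i j k. d2 (fund_form g I) x i j k = wedge12 (theta x) (fund_form g I x) i j k"
  shows "dfun (angle I J) x = (1/2) *\<^sub>R (transpose (I x ** J x - J x ** I x) *v theta x)"
proof -
  note jetI = generalized_kaehler_jets(1)[OF U gk] and jetJ = generalized_kaehler_jets(2)[OF U gk]
  have "smooth_mat U g" "smooth_mat U I" "smooth_mat U J"
    using gk by (simp_all add: generalized_kaehler_def riemannian_metric_def complex_structure_def)
  then have mg: "mat_differentiable g x" and mI: "mat_differentiable I x"
    and mJ: "mat_differentiable J x"
    using smooth_mat_differentiable U(2) by blast+
  have leeI: "\<forall>l j k. d_omega (g x) (mat_pd g x) (I x) (mat_pd I x) l j k = wedge12 (theta x) (g x ** I x) l j k"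
    using lee U d2_fund_form_eq_d_omega[OF mg mI] by (simp add: fund_form_def)
  have leeJ: "\<forall>l j k. d_omega (g x) (mat_pd g x) (J x) (mat_pd J x) l j k = wedge12 (- theta x) (g x ** J x) l j k"
    using lee_form_J[OF U gk nondeg lee] d2_fund_form_eq_d_omega[OF mg mJ] by simp
  have hI: "hermitian_cs (g x) (I x)" and hJ: "hermitian_cs (g x) (J x)"
    using jetI jetJ by (simp_all add: hermitian_jet_def)
  have "pd (angle I J) l x = (trace (mat_pd I x l ** J x) + trace (mat_pd J x l ** I x)) / 4" for l
    using pd_angle[OF mI mJ, of l] by (simp add: trace_add trace_mul_sym[of "I x"])
  moreover have "trace (mat_pd I x l ** J x) + trace (mat_pd J x l ** I x)
      = 2 * (transpose (I x ** J x - J x ** I x) *v theta x) $ l" for l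
    using trace_derivative_lee_form[OF jetI hJ leeI, of l] trace_derivative_lee_form[OF jetJ hI leeJ, of l]
    by (simp add: matrix_diff_ldistrib trace_sub transpose_diff matrix_vector_mult_uminus_right
        matrix_vector_mult_diff_rdistrib)
  ultimately show ?thesis
    by (simp add: vec_eq_iff dfun_def)
qed

theorem lemma3p12:
  fixes U :: "(real^4) set"
    and g I J :: "real^4 \<Rightarrow> real^4^4"
    and theta :: "real^4 \<Rightarrow> real^4"
  assumes "open U"
    and "generalized_kaehler U g I J"
    and "nondegenerate U I J"
    and "\<forall>x\<in>U. \<forall>i j k. d2 (fund_form g I) x i j k = wedge12 (theta x) (fund_form g I x) i j k"
    and "x \<in> U"
  shows "inner_g (g x) (dfun (angle I J) x) (theta x) = 0 \<and>
         inner_g (g x) (theta x) (theta x)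
           = inner_g (g x) (dfun (angle I J) x) (dfun (angle I J) x) / (1 - (angle I J x)\<^sup>2)"
proof -
  have "hermitian_jet (g x) (mat_pd g x) (I x) (mat_pd I x)"
    and "hermitian_jet (g x) (mat_pd g x) (J x) (mat_pd J x)"
    using generalized_kaehler_jets[OF assms(1,5,2)] by auto
  then have metric: "metric_matrix (g x)" and hI: "hermitian_cs (g x) (I x)"
    and hJ: "hermitian_cs (g x) (J x)"
    by (simp_all add: hermitian_jet_def)
  have nondeg: "det (I x ** J x - J x ** I x) \<noteq> 0"
    using assms(3,5) by (simp add: nondegenerate_def)
  have "I x ** J x + J x ** I x = (2 * angle I J x) *\<^sub>R mat 1"
    using anticommutator_nondegenerate[OF metric hI hJ nondeg] by (simp add: angle_def)
  from commutator_norm_identities[OF metric hI hJ this nondeg, of "theta x"]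
  show ?thesis
    unfolding dfun_angle[OF assms(1,5,2,3,4)] by (simp add: power_mult_distrib)
qed

end
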